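(* Consider the $K$-class system with dependence on aggregate (marginal) distributions described in the context, with constants $M_R,L_R,L_P,L_Q>0$ and $\gamma\in[0,1)$. Let $\mathbf x_0^{\mathbf N}$ be initial states and $\boldsymbol\mu_0\in\mathcal P(\mathcal X\times[K])$ their empirical joint distribution. Define $S_R=M_R(1+L_Q)+L_R(2+L_Q)$, $S_P=(1+L_Q)+L_P(2+L_Q)$, $C_R=M_R+L_R$, $C_P=2+L_P$, $S_R'=M_R+L_R$, $S_R''=M_RL_Q+L_R(1+L_Q)$, $S_P'=1+L_P$, $S_P''=L_Q+L_P(1+L_Q)$. If $\gamma S_P<1$, then for every policy $\boldsymbol\pi\in\Pi$, $$\begin{aligned}\Big|v^{\mathbf N}(\mathbf x_0^{\mathbf N},\boldsymbol\pi)-v^{\mathrm{MF}}(\boldsymbol\mu_0,\boldsymbol\pi)\Big|\le{}&\frac{C_R}{1-\gamma}\sqrt{|\mathcal U|}\frac1{\sqrt{N_{\mathrm{pop}}}}+\sqrt{|\mathcal X||\mathcal U|}\Big(\frac{\gamma C_P}{1-\gamma}\Big)\Big[\frac{S_R'}{N_{\mathrm{pop}}}\Big(\sum_{k}\sqrt{N_k}\Big)+\frac{S_R''}{\sqrt{N_{\mathrm{pop}}}}\Big]\\&+C_P\Big(\frac{S_R}{S_P-1}\Big)\sqrt{|\mathcal X||\mathcal U|}\Big(\frac{\gamma}{1-\gamma S_P}-\frac{\gamma}{1-\gamma}\Big)\Big[\frac{S_P'}{N_{\mathrm{pop}}}\Big(\sum_k\sqrt{N_k}\Big)+\frac{S_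P''}{\sqrt{N_{\mathrm{pop}}}}\Big].\end{aligned}$$
   Context: Fix $K\ge1$, $N_1,\dots,N_K\ge1$, $[K]=\{1,\dots,K\}$, $N_{\mathrm{pop}}=\sum_kN_k$, finite sets $\mathcal X,\mathcal U$; $\mathcal P(A)$ is the set of probability distributions on $A$, $|\cdot|_1$ the $L_1$ norm. Agent $j\in[N_k]$ of class $k$ has state $x_{j,k}^t$ and action $u_{j,k}^t$. Empirical joint distributions: $\boldsymbol\mu_t^{\mathbf N}(x,k)=\frac1{N_{\mathrm{pop}}}\sum_{j=1}^{N_k}\mathbf 1(x_{j,k}^t=x)$, $\boldsymbol\nu_t^{\mathbf N}(u,k)=\frac1{N_{\mathrm{pop}}}\sum_{j=1}^{N_k}\mathbf 1(u_{j,k}^t=u)$. For $\boldsymbol\mu\in\mathcal P(\mathcal X\times[K])$, $\boldsymbol\nu\in\mathcal P(\mathcal U\times[K])$ the marginals are $\boldsymbol\mu[\mathcal X](x)=\sum_k\boldsymbol\mu(x,k)$, $\boldsymbol\nu[\mathcal U](u)=\sum_k\boldsymbol\nu(u,k)$. For each $k$: $r_k:\mathcal X\times\mathcal U\times\mathcal P(\mathcal X)\times\mathcal P(\mathcal U)\to\mathbb R$, $P_k:\mathcal X\times\mathcal U\times\mathcal P(\mathcal X)\times\mathcal P(\mathcal U)\to\mathcal P(\mathcal X)$ with $|r_k|\le M_R$, $|r_k(x,u,\mu_1,\nu_1)-r_k(x,u,\mu_2,\nu_2)|\le L_R(|\mu_1-\mu_2|_1+|\nu_1-\nu_2|_1)$,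 $|P_k(x,u,\mu_1,\nu_1)-P_k(x,u,\mu_2,\nu_2)|_1\le L_P(|\mu_1-\mu_2|_1+|\nu_1-\nu_2|_1)$ for all $\mu_i\in\mathcal P(\mathcal X),\nu_i\in\mathcal P(\mathcal U)$. A policy $\boldsymbol\pi=\{\boldsymbol\pi_t\}_{t\ge0}$, $\boldsymbol\pi_t=(\pi_k^t)_k$, has decision rules $\pi_k^t:\mathcal X\times\mathcal P(\mathcal X)\to\mathcal P(\mathcal U)$; $\Pi$ is the set of policies with $|\pi_k^t(x,\mu_1)-\pi_k^t(x,\mu_2)|_1\le L_Q|\mu_1-\mu_2|_1$ for all $t,k,x$. Dynamics: conditioned on all states at time $t$, actions are independent across agents with $u_{j,k}^t\sim\pi_k^t(x_{j,k}^t,\boldsymbol\mu_t^{\mathbf N}[\mathcal X])$; conditioned on states and actions, next states are independent with $x_{j,k}^{t+1}\sim P_k(x_{j,k}^t,u_{j,k}^t,\boldsymbol\mu_t^{\mathbf N}[\mathcal X],\boldsymbol\nu_t^{\mathbf N}[\mathcal U])$. Empirical value $v^{\mathbf N}(\mathbf x_0^{\mathbf N},\boldsymbol\pi)=\frac1{N_{\mathrm{pop}}}\sum_k\sum_{j}\mathbb E[\sum_t\gamma^tr_k(x_{j,k}^t,u_{j,k}^t,\boldsymbol\mu_t^{\mathbf N}[\mathcal X],\boldsymbol\nu_t^{\mathbf N}[\mathcal U])]$. Mean-field operators for $\boldsymbol\mu\in\mathcal P(\mathcal X\times[K])$ and decision rules $\boldsymbol\pi=(\pi_k)_k$: $\nu^{\mathrm{MF}}(\boldsymbol\mu,\boldsymbol\pi)(u,k)=\sum_x\pi_k(x,\boldsymbol\mu[\mathcal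 X])(u)\boldsymbol\mu(x,k)$; $P^{\mathrm{MF}}(\boldsymbol\mu,\boldsymbol\pi)(x',k)=\sum_{x,u}\boldsymbol\mu(x,k)\pi_k(x,\boldsymbol\mu[\mathcal X])(u)P_k(x,u,\boldsymbol\mu[\mathcal X],\nu^{\mathrm{MF}}(\boldsymbol\mu,\boldsymbol\pi)[\mathcal U])(x')$; $r_k^{\mathrm{MF}}(\boldsymbol\mu,\boldsymbol\pi)=\sum_{x,u}\boldsymbol\mu(x,k)\pi_k(x,\boldsymbol\mu[\mathcal X])(u)r_k(x,u,\boldsymbol\mu[\mathcal X],\nu^{\mathrm{MF}}(\boldsymbol\mu,\boldsymbol\pi)[\mathcal U])$. With $\boldsymbol\mu_{t+1}=P^{\mathrm{MF}}(\boldsymbol\mu_t,\boldsymbol\pi_t)$, $v^{\mathrm{MF}}(\boldsymbol\mu_0,\boldsymbol\pi)=\sum_k\sum_{t\ge0}\gamma^tr_k^{\mathrm{MF}}(\boldsymbol\mu_t,\boldsymbol\pi_t)$. *)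

theory Defs
  imports "HOL-Probability.Probability"
begin

definition agents :: "nat \<Rightarrow> (nat \<Rightarrow> nat) \<Rightarrow> (nat \<times> nat) set" where
  "agents K N = {(j,k). k < K \<and> j < N k}"

definition Npop :: "nat \<Rightarrow> (nat \<Rightarrow> nat) \<Rightarrow> nat" where
  "Npop K N = (\<Sum>k<K. N k)"

definition l1 :: "'a::finite pmf \<Rightarrow> 'a pmf \<Rightarrow> real" where
  "l1 p q = (\<Sum>a\<in>UNIV. \<bar>pmf p a - pmf q a\<bar>)"

definition emp :: "'b set \<Rightarrow> ('b \<Rightarrow> 'a) \<Rightarrow> 'a pmf" where
  "emp A f = map_pmf f (pmf_of_set A)"

definition act_dist ::
  "nat \<Rightarrow> (nat \<Rightarrow> nat) \<Rightarrow> (nat \<Rightarrow> nat \<Rightarrow> 'x \<Rightarrow> 'x pmf \<Rightarrow> 'u pmf) \<Rightarrow> nat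
   \<Rightarrow> (nat \<times> nat \<Rightarrow> 'x) \<Rightarrow> (nat \<times> nat \<Rightarrow> 'u) pmf" where
  "act_dist K N pol t xs =
     Pi_pmf (agents K N) undefined (\<lambda>a. pol t (snd a) (xs a) (emp (agents K N) xs))"

definition next_dist ::
  "nat \<Rightarrow> (nat \<Rightarrow> nat) \<Rightarrow> (nat \<Rightarrow> 'x \<Rightarrow> 'u \<Rightarrow> 'x pmf \<Rightarrow> 'u pmf \<Rightarrow> 'x pmf)
   \<Rightarrow> (nat \<times> nat \<Rightarrow> 'x) \<Rightarrow> (nat \<times> nat \<Rightarrow> 'u) \<Rightarrow> (nat \<times> nat \<Rightarrow> 'x) pmf" where
  "next_dist K N P xs us =
     Pi_pmf (agents K N) undefined
       (\<lambda>a. P (snd a) (xs a) (us a) (emp (agents K N) xs) (emp (agents K N) us))"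

primrec state_dist ::
  "nat \<Rightarrow> (nat \<Rightarrow> nat) \<Rightarrow> (nat \<Rightarrow> 'x \<Rightarrow> 'u \<Rightarrow> 'x pmf \<Rightarrow> 'u pmf \<Rightarrow> 'x pmf)
   \<Rightarrow> (nat \<Rightarrow> nat \<Rightarrow> 'x \<Rightarrow> 'x pmf \<Rightarrow> 'u pmf) \<Rightarrow> (nat \<times> nat \<Rightarrow> 'x) \<Rightarrow> nat
   \<Rightarrow> (nat \<times> nat \<Rightarrow> 'x) pmf" where
  "state_dist K N P pol x0 0 = return_pmf x0"
| "state_dist K N P pol x0 (Suc t) =
     bind_pmf (state_dist K N P pol x0 t)
       (\<lambda>xs. bind_pmf (act_dist K N pol t xs) (\<lambda>us. next_dist K N P xs us))"

definition emp_value ::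
  "nat \<Rightarrow> (nat \<Rightarrow> nat) \<Rightarrow> (nat \<Rightarrow> 'x \<Rightarrow> 'u \<Rightarrow> 'x pmf \<Rightarrow> 'u pmf \<Rightarrow> real)
   \<Rightarrow> (nat \<Rightarrow> 'x \<Rightarrow> 'u \<Rightarrow> 'x pmf \<Rightarrow> 'u pmf \<Rightarrow> 'x pmf)
   \<Rightarrow> (nat \<Rightarrow> nat \<Rightarrow> 'x \<Rightarrow> 'x pmf \<Rightarrow> 'u pmf) \<Rightarrow> real \<Rightarrow> (nat \<times> nat \<Rightarrow> 'x) \<Rightarrow> real" where
  "emp_value K N r P pol \<gamma> x0 =
     (1 / real (Npop K N)) *
     (\<Sum>a\<in>agents K N. \<Sum>t. \<gamma> ^ t *
        measure_pmf.expectation (state_dist K N P pol x0 t) (\<lambda>xs.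
          measure_pmf.expectation (act_dist K N pol t xs) (\<lambda>us.
            r (snd a) (xs a) (us a) (emp (agents K N) xs) (emp (agents K N) us))))"

definition nu_MF ::
  "(nat \<Rightarrow> 'x \<Rightarrow> 'x pmf \<Rightarrow> 'u pmf) \<Rightarrow> ('x \<times> nat) pmf \<Rightarrow> ('u \<times> nat) pmf" where
  "nu_MF d mu = bind_pmf mu (\<lambda>(x,k). map_pmf (\<lambda>u. (u,k)) (d k x (map_pmf fst mu)))"

definition P_MF ::
  "(nat \<Rightarrow> 'x \<Rightarrow> 'u \<Rightarrow> 'x pmf \<Rightarrow> 'u pmf \<Rightarrow> 'x pmf) \<Rightarrow> (nat \<Rightarrow> 'x \<Rightarrow> 'x pmf \<Rightarrow> 'u pmf)
   \<Rightarrow> ('x \<times> nat) pmf \<Rightarrow> ('x \<times> nat) pmf" where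
  "P_MF P d mu = bind_pmf mu (\<lambda>(x,k). bind_pmf (d k x (map_pmf fst mu)) (\<lambda>u.
      map_pmf (\<lambda>x'. (x',k)) (P k x u (map_pmf fst mu) (map_pmf fst (nu_MF d mu)))))"

definition r_MF ::
  "(nat \<Rightarrow> 'x::finite \<Rightarrow> 'u::finite \<Rightarrow> 'x pmf \<Rightarrow> 'u pmf \<Rightarrow> real) \<Rightarrow> (nat \<Rightarrow> 'x \<Rightarrow> 'x pmf \<Rightarrow> 'u pmf)
   \<Rightarrow> ('x \<times> nat) pmf \<Rightarrow> nat \<Rightarrow> real" where
  "r_MF r d mu k = (\<Sum>x\<in>UNIV. \<Sum>u\<in>UNIV. pmf mu (x,k) * pmf (d k x (map_pmf fst mu)) u *
      r k x u (map_pmf fst mu) (map_pmf fst (nu_MF d mu)))"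

primrec mf_dist ::
  "(nat \<Rightarrow> 'x \<Rightarrow> 'u \<Rightarrow> 'x pmf \<Rightarrow> 'u pmf \<Rightarrow> 'x pmf) \<Rightarrow> (nat \<Rightarrow> nat \<Rightarrow> 'x \<Rightarrow> 'x pmf \<Rightarrow> 'u pmf)
   \<Rightarrow> ('x \<times> nat) pmf \<Rightarrow> nat \<Rightarrow> ('x \<times> nat) pmf" where
  "mf_dist P pol mu0 0 = mu0"
| "mf_dist P pol mu0 (Suc t) = P_MF P (pol t) (mf_dist P pol mu0 t)"

definition mf_value ::
  "nat \<Rightarrow> (nat \<Rightarrow> 'x::finite \<Rightarrow> 'u::finite \<Rightarrow> 'x pmf \<Rightarrow> 'u pmf \<Rightarrow> real)
   \<Rightarrow> (nat \<Rightarrow> 'x \<Rightarrow> 'u \<Rightarrow> 'x pmf \<Rightarrow> 'u pmf \<Rightarrow> 'x pmf)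
   \<Rightarrow> (nat \<Rightarrow> nat \<Rightarrow> 'x \<Rightarrow> 'x pmf \<Rightarrow> 'u pmf) \<Rightarrow> real \<Rightarrow> ('x \<times> nat) pmf \<Rightarrow> real" where
  "mf_value K r P pol \<gamma> mu0 =
     (\<Sum>t. \<gamma> ^ t * (\<Sum>k<K. r_MF r (pol t) (mf_dist P pol mu0 t) k))"

end

theory Submission
  imports Defs
begin

text \<open>
  Let \<open>\<mu>\<^sub>t\<close> be the mean-field flow started at the empirical law of \<open>x\<^sub>0\<close>, and let \<open>J\<^sub>t\<close>
  and \<open>M\<^sub>t\<close> be the \<open>L\<^sub>1\<close> distances between \<open>\<mu>\<^sub>t\<close> and the empirical law of the \<open>N\<close>-agent states
  at time \<open>t\<close>, on \<open>\<X> \<times> [K]\<close> and on \<open>\<X>\<close>. Since the model sees the population only through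
  its marginals, one mean-field step turns \<open>(J, M)\<close> into distances at most \<open>S\<^sub>P' J + S\<^sub>P'' M\<close>,
  and the mean-field reward moves by at most \<open>S\<^sub>R' J + S\<^sub>R'' M\<close>. One step of the \<open>N\<close>-agent
  system lands, in expectation, within \<open>C\<^sub>P \<surd>(|\<X>||\<U>|) \<Sum>\<^sub>k \<surd>N\<^sub>k / N\<close> (jointly) and
  \<open>C\<^sub>P \<surd>(|\<X>||\<U>| / N)\<close> (marginally) of the mean-field image of its current empirical law: the
  error is the sampling error of independent actions and next states, controlled by the
  additivity of second moments of independent centred sums. So \<open>D\<^sub>t = E (S\<^sub>P' J\<^sub>t + S\<^sub>P'' M\<^sub>t)\<close>
  obeys \<open>D\<^sub>0 = 0\<close> and \<open>D\<^sub>t\<^sub>+\<^sub>1 \<le> G + S\<^sub>P D\<^sub>t\<close>, the reward gap at time \<open>t\<close> is at most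
  \<open>L\<^sub>R \<surd>(|\<U>| / N) + E (S\<^sub>R' J\<^sub>t + S\<^sub>R'' M\<^sub>t)\<close>, and the discounted sum of these gaps converges
  because \<open>\<gamma> S\<^sub>P < 1\<close>.
\<close>

section \<open>Concentration for independent sampling\<close>

lemma expectation_eq_sum_set_pmf:
  fixes f :: "'a \<Rightarrow> real"
  assumes "finite (set_pmf p)"
  shows "measure_pmf.expectation p f = (\<Sum>a\<in>set_pmf p. pmf p a * f a)"
  using assms by (subst integral_measure_pmf[of "set_pmf p"]) auto

lemma expectation_eq_sum_UNIV:
  fixes f :: "'a::finite \<Rightarrow> real"
  shows "measure_pmf.expectation p f = (\<Sum>u\<in>UNIV. pmf p u * f u)"
  by (subst integral_measure_pmf[of UNIV]) auto

lemma expectation_indicator_pmf: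
  "measure_pmf.expectation p (\<lambda>y. if y = z then 1 else 0 :: real) = pmf p z"
  by (subst integral_measure_pmf_real[of "{z}"]) (auto split: if_splits)

lemma finite_set_Pi_pmf:
  "finite A \<Longrightarrow> (\<And>a. a \<in> A \<Longrightarrow> finite (set_pmf (p a))) \<Longrightarrow> finite (set_pmf (Pi_pmf A d p))"
  by (simp add: set_Pi_pmf finite_PiE_dflt)

lemma expectation_bind_pmf_finite:
  fixes h :: "'b \<Rightarrow> real"
  assumes "finite (set_pmf p)" "\<And>x. x \<in> set_pmf p \<Longrightarrow> finite (set_pmf (f x))"
  shows "measure_pmf.expectation (bind_pmf p f) h
       = measure_pmf.expectation p (\<lambda>x. measure_pmf.expectation (f x) h)"
  using assms
  by (subst pmf_expectation_bind[of "set_pmf p"]) (simp_all add: expectation_eq_sum_set_pmf)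

lemma expectation_Pi_pmf_component:
  fixes g :: "'b \<Rightarrow> real"
  assumes "finite A" "a \<in> A"
  shows "measure_pmf.expectation (Pi_pmf A d p) (\<lambda>f. g (f a)) = measure_pmf.expectation (p a) g"
proof -
  have "measure_pmf.expectation (Pi_pmf A d p) (\<lambda>f. g (f a))
      = measure_pmf.expectation (map_pmf (\<lambda>f. f a) (Pi_pmf A d p)) g" by simp
  also have "map_pmf (\<lambda>f. f a) (Pi_pmf A d p) = p a"
    using assms by (simp add: Pi_pmf_component)
  finally show ?thesis .
qed

lemma abs_expectation_le:
  fixes f :: "'a \<Rightarrow> real"
  assumes "finite (set_pmf p)" "\<And>x. \<bar>f x\<bar> \<le> B"
  shows "\<bar>measure_pmf.expectation p f\<bar> \<le> B"
proof -
  have "\<bar>measure_pmf.expectation p f\<bar> \<le> measure_pmf.expectation p (\<lambda>_. B)"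
    using assms by (intro order_trans[OF integral_abs_bound] integral_mono)
      (simp_all add: integrable_measure_pmf_finite)
  then show ?thesis by simp
qed

lemma expectation_le_add_const:
  fixes f g :: "'a \<Rightarrow> real"
  assumes "finite (set_pmf p)" "\<And>x. f x \<le> g x + c"
  shows "measure_pmf.expectation p f \<le> measure_pmf.expectation p g + c"
proof -
  have "measure_pmf.expectation p f \<le> measure_pmf.expectation p (\<lambda>x. g x + c)"
    using assms by (intro integral_mono) (simp_all add: integrable_measure_pmf_finite)
  then show ?thesis
    using assms(1) by (simp add: integrable_measure_pmf_finite)
qed

lemma expectation_abs_le_sqrt_second_moment:
  fixes Z :: "'a \<Rightarrow> real"
  assumes "finite (set_pmf p)"
  shows "measure_pmf.expectation p (\<lambda>x. \<bar>Z x\<bar>) \<le> sqrt (measure_pmf.expectation p (\<lambda>x. (Z x)\<^sup>2))"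
proof (rule real_le_rsqrt)
  have "0 \<le> measure_pmf.variance p (\<lambda>x. \<bar>Z x\<bar>)"
    by (rule measure_pmf.variance_positive)
  also have "\<dots> = measure_pmf.expectation p (\<lambda>x. (Z x)\<^sup>2) - (measure_pmf.expectation p (\<lambda>x. \<bar>Z x\<bar>))\<^sup>2"
    using assms by (subst measure_pmf.variance_eq) (simp_all add: integrable_measure_pmf_finite)
  finally show "(measure_pmf.expectation p (\<lambda>x. \<bar>Z x\<bar>))\<^sup>2 \<le> measure_pmf.expectation p (\<lambda>x. (Z x)\<^sup>2)"
    by simp
qed

lemma variance_le_expectation_unit_interval:
  fixes g :: "'a \<Rightarrow> real"
  assumes "finite (set_pmf p)" "\<And>y. 0 \<le> g y" "\<And>y. g y \<le> 1"
  shows "measure_pmf.variance p g \<le> measure_pmf.expectation p g"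
proof -
  have "measure_pmf.variance p g \<le> measure_pmf.expectation p (\<lambda>y. (g y)\<^sup>2)"
    using assms(1) by (subst measure_pmf.variance_eq) (simp_all add: integrable_measure_pmf_finite)
  also have "\<dots> \<le> measure_pmf.expectation p g"
    using assms
    by (intro integral_mono) (simp_all add: integrable_measure_pmf_finite power2_eq_square mult_left_le)
  finally show ?thesis .
qed

lemma expectation_pair_pmf_mult:
  fixes f :: "'a \<Rightarrow> real" and g :: "'b \<Rightarrow> real"
  assumes "finite (set_pmf p)" "finite (set_pmf q)"
  shows "measure_pmf.expectation (pair_pmf p q) (\<lambda>z. f (fst z) * g (snd z))
       = measure_pmf.expectation p f * measure_pmf.expectation q g"
proof -
  have "measure_pmf.expectation (pair_pmf p q) (\<lambda>z. f (fst z) * g (snd z))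
     = (\<Sum>(a,b)\<in>set_pmf p \<times> set_pmf q. (pmf p a * f a) * (pmf q b * g b))"
    using assms
    by (subst expectation_eq_sum_set_pmf) (auto simp: pmf_pair intro!: sum.cong)
  also have "\<dots> = measure_pmf.expectation p f * measure_pmf.expectation q g"
    using assms by (simp add: expectation_eq_sum_set_pmf sum_product sum.cartesian_product)
  finally show ?thesis .
qed

lemma expectation_square_sum_Pi_pmf:
  fixes h :: "'a \<Rightarrow> 'b \<Rightarrow> real"
  assumes "finite A" "\<And>a. a \<in> A \<Longrightarrow> measure_pmf.expectation (p a) (h a) = 0"
    and "\<And>a. a \<in> A \<Longrightarrow> finite (set_pmf (p a))"
  shows "measure_pmf.expectation (Pi_pmf A dflt p) (\<lambda>f. (\<Sum>a\<in>A. h a (f a))\<^sup>2)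
       = (\<Sum>a\<in>A. measure_pmf.expectation (p a) (\<lambda>y. (h a y)\<^sup>2))"
  using assms
proof (induction A rule: finite_induct)
  case empty
  then show ?case by simp
next
  case (insert x F)
  let ?Q = "pair_pmf (p x) (Pi_pmf F dflt p)"
  define S where "S f = (\<Sum>a\<in>F. h a (f a))" for f
  have fin_F: "finite (set_pmf (Pi_pmf F dflt p))"
    using insert by (intro finite_set_Pi_pmf) auto
  have fin_x: "finite (set_pmf (p x))" using insert by auto
  have S_upd: "(\<Sum>a\<in>F. h a (if a = x then y else f a)) = S f" for y f
    using insert by (auto simp: S_def intro!: sum.cong)
  have "measure_pmf.expectation (Pi_pmf (insert x F) dflt p) (\<lambda>f. (\<Sum>a\<in>insert x F. h a (f a))\<^sup>2)
     = measure_pmf.expectation ?Q (\<lambda>z. (h x (fst z))\<^sup>2 + 2 * (h x (fst z) * S (snd z)) + (S (snd z))\<^sup>2)"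
    using insert
    by (subst Pi_pmf_insert)
       (auto simp: case_prod_unfold power2_sum algebra_simps S_upd intro!: Bochner_Integration.integral_cong)
  also have "\<dots> = measure_pmf.expectation ?Q (\<lambda>z. (h x (fst z))\<^sup>2)
     + 2 * measure_pmf.expectation ?Q (\<lambda>z. h x (fst z) * S (snd z))
     + measure_pmf.expectation ?Q (\<lambda>z. (S (snd z))\<^sup>2)"
    using fin_x fin_F by (simp add: integrable_measure_pmf_finite)
  also have "measure_pmf.expectation ?Q (\<lambda>z. h x (fst z) * S (snd z)) = 0"
    using expectation_pair_pmf_mult[OF fin_x fin_F, of "h x" S] insert by simp
  also have "measure_pmf.expectation ?Q (\<lambda>z. (h x (fst z))\<^sup>2) = measure_pmf.expectation (p x) (\<lambda>y. (h x y)\<^sup>2)"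
    by (rule expectation_pair_pmf_fst)
  also have "measure_pmf.expectation ?Q (\<lambda>z. (S (snd z))\<^sup>2)
      = (\<Sum>a\<in>F. measure_pmf.expectation (p a) (\<lambda>y. (h a y)\<^sup>2))"
    using insert expectation_pair_pmf_snd[of "p x" _ "\<lambda>g. (S g)\<^sup>2"] by (simp add: S_def)
  finally show ?case
    using insert by simp
qed

lemma expectation_abs_centered_sum_Pi_pmf_le:
  fixes g :: "'a \<Rightarrow> 'b::finite \<Rightarrow> real"
  assumes A: "finite A" and B: "B \<subseteq> A"
    and g01: "\<And>a y. a \<in> B \<Longrightarrow> 0 \<le> g a y \<and> g a y \<le> 1"
  shows "measure_pmf.expectation (Pi_pmf A d p)
           (\<lambda>f. \<bar>\<Sum>a\<in>B. g a (f a) - measure_pmf.expectation (p a) (g a)\<bar>)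
         \<le> sqrt (\<Sum>a\<in>B. measure_pmf.expectation (p a) (g a))"
proof -
  define h where
    "h a y = (if a \<in> B then g a y - measure_pmf.expectation (p a) (g a) else 0)" for a y
  have sum_h: "(\<Sum>a\<in>A. h a (f a)) = (\<Sum>a\<in>B. g a (f a) - measure_pmf.expectation (p a) (g a))" for f
    using A B by (simp add: h_def sum.inter_restrict[symmetric] Int_absorb1)
  have "measure_pmf.expectation (Pi_pmf A d p) (\<lambda>f. \<bar>\<Sum>a\<in>A. h a (f a)\<bar>)
      \<le> sqrt (measure_pmf.expectation (Pi_pmf A d p) (\<lambda>f. (\<Sum>a\<in>A. h a (f a))\<^sup>2))"
    using A by (intro expectation_abs_le_sqrt_second_moment finite_set_Pi_pmf) auto
  also have "measure_pmf.expectation (Pi_pmf A d p) (\<lambda>f. (\<Sum>a\<in>A. h a (f a))\<^sup>2)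
      = (\<Sum>a\<in>A. measure_pmf.expectation (p a) (\<lambda>y. (h a y)\<^sup>2))"
  proof (rule expectation_square_sum_Pi_pmf[OF A])
    show "measure_pmf.expectation (p a) (h a) = 0" for a
      by (cases "a \<in> B") (simp_all add: h_def[abs_def] integrable_measure_pmf_finite)
  qed simp
  also have "\<dots> = (\<Sum>a\<in>B. measure_pmf.expectation (p a) (\<lambda>y. (h a y)\<^sup>2))"
    using A B by (intro sum.mono_neutral_right) (auto simp: h_def)
  also have "\<dots> = (\<Sum>a\<in>B. measure_pmf.variance (p a) (g a))"
    by (intro sum.cong) (auto simp: h_def)
  also have "\<dots> \<le> (\<Sum>a\<in>B. measure_pmf.expectation (p a) (g a))"
    using g01 by (intro sum_mono variance_le_expectation_unit_interval) auto
  finally show ?thesis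
    by (simp add: sum_h)
qed

lemma sum_sqrt_le_sqrt_card_mult_sum:
  fixes v :: "'z \<Rightarrow> real"
  assumes "finite Z" "\<And>z. z \<in> Z \<Longrightarrow> 0 \<le> v z"
  shows "(\<Sum>z\<in>Z. sqrt (v z)) \<le> sqrt (real (card Z) * (\<Sum>z\<in>Z. v z))"
proof (rule real_le_rsqrt)
  have "(\<Sum>z\<in>Z. sqrt (v z))\<^sup>2 \<le> (\<Sum>z\<in>Z. (sqrt (v z))\<^sup>2) * card Z"
    by (rule sum_squared_le_sum_of_squares)
  also have "(\<Sum>z\<in>Z. (sqrt (v z))\<^sup>2) = (\<Sum>z\<in>Z. v z)"
    using assms by (intro sum.cong) auto
  finally show "(\<Sum>z\<in>Z. sqrt (v z))\<^sup>2 \<le> real (card Z) * (\<Sum>z\<in>Z. v z)"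
    by (simp add: mult.commute)
qed

lemma expectation_l1_centered_sum_Pi_pmf_le:
  fixes q :: "'a \<Rightarrow> 'b::finite \<Rightarrow> 'z::finite \<Rightarrow> real"
  assumes A: "finite A" and B: "B \<subseteq> A"
    and q_nonneg: "\<And>a y z. a \<in> B \<Longrightarrow> 0 \<le> q a y z"
    and q_sum: "\<And>a y. a \<in> B \<Longrightarrow> (\<Sum>z\<in>UNIV. q a y z) = 1"
  shows "measure_pmf.expectation (Pi_pmf A d p)
           (\<lambda>f. \<Sum>z\<in>UNIV. \<bar>\<Sum>a\<in>B. q a (f a) z - measure_pmf.expectation (p a) (\<lambda>y. q a y z)\<bar>)
         \<le> sqrt (real CARD('z) * real (card B))"
proof -
  have fin_Pi: "finite (set_pmf (Pi_pmf A d p))"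
    using A by (intro finite_set_Pi_pmf) auto
  have q_le_1: "q a y z \<le> 1" if "a \<in> B" for a y z
    using member_le_sum[of z UNIV "q a y"] q_nonneg q_sum that by simp
  have "measure_pmf.expectation (Pi_pmf A d p)
           (\<lambda>f. \<Sum>z\<in>UNIV. \<bar>\<Sum>a\<in>B. q a (f a) z - measure_pmf.expectation (p a) (\<lambda>y. q a y z)\<bar>)
      = (\<Sum>z\<in>UNIV. measure_pmf.expectation (Pi_pmf A d p)
           (\<lambda>f. \<bar>\<Sum>a\<in>B. q a (f a) z - measure_pmf.expectation (p a) (\<lambda>y. q a y z)\<bar>))"
    using fin_Pi by (intro Bochner_Integration.integral_sum) (simp add: integrable_measure_pmf_finite)
  also have "\<dots> \<le> (\<Sum>z\<in>UNIV. sqrt (\<Sum>a\<in>B. measure_pmf.expectation (p a) (\<lambda>y. q a y z)))"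
    using q_nonneg q_le_1 by (intro sum_mono expectation_abs_centered_sum_Pi_pmf_le[OF A B]) auto
  also have "\<dots> \<le> sqrt (real CARD('z) * (\<Sum>z\<in>UNIV. \<Sum>a\<in>B. measure_pmf.expectation (p a) (\<lambda>y. q a y z)))"
    using q_nonneg
    by (intro sum_sqrt_le_sqrt_card_mult_sum) (auto intro!: sum_nonneg integral_nonneg_AE)
  also have "(\<Sum>z\<in>UNIV. \<Sum>a\<in>B. measure_pmf.expectation (p a) (\<lambda>y. q a y z))
      = (\<Sum>a\<in>B. measure_pmf.expectation (p a) (\<lambda>y. \<Sum>z\<in>UNIV. q a y z))"
    by (subst sum.swap) (simp add: integrable_measure_pmf_finite)
  also have "\<dots> = real (card B)"
    by (simp add: q_sum)
  finally show ?thesis .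
qed

lemma pmf_emp:
  assumes "finite A" "A \<noteq> {}"
  shows "pmf (emp A f) z = (\<Sum>a\<in>A. if f a = z then 1 else 0) / real (card A)"
proof -
  have "pmf (emp A f) z = real (card {a\<in>A. f a = z}) / real (card A)"
    using assms by (simp add: emp_def pmf_map measure_pmf_of_set vimage_def Int_def conj_commute)
  then show ?thesis
    using assms by (simp add: sum.inter_filter[symmetric])
qed

lemma expectation_l1_emp_Pi_pmf_le:
  fixes \<pi> :: "'a \<Rightarrow> 'u::finite pmf"
  assumes A: "finite A" "A \<noteq> {}"
    and \<nu>: "\<And>u. pmf \<nu> u = (\<Sum>a\<in>A. pmf (\<pi> a) u) / real (card A)"
  shows "measure_pmf.expectation (Pi_pmf A d \<pi>) (\<lambda>us. l1 (emp A us) \<nu>)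
       \<le> sqrt (real CARD('u)) / sqrt (real (card A))"
proof -
  have card_pos: "real (card A) > 0" using A by (simp add: card_gt_0_iff)
  have "(\<lambda>us. l1 (emp A us) \<nu>) = (\<lambda>us. (\<Sum>u\<in>UNIV. \<bar>\<Sum>a\<in>A. (if us a = u then 1 else 0)
          - measure_pmf.expectation (\<pi> a) (\<lambda>y. if y = u then 1 else 0)\<bar>) / real (card A))"
    using A card_pos
    by (auto simp: l1_def pmf_emp \<nu> expectation_indicator_pmf sum_subtractf fun_eq_iff
        sum_divide_distrib[symmetric] diff_divide_distrib[symmetric])
  then have "measure_pmf.expectation (Pi_pmf A d \<pi>) (\<lambda>us. l1 (emp A us) \<nu>)
      = measure_pmf.expectation (Pi_pmf A d \<pi>) (\<lambda>us. \<Sum>u\<in>UNIV. \<bar>\<Sum>a\<in>A. (if us a = u then 1 else 0)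
          - measure_pmf.expectation (\<pi> a) (\<lambda>y. if y = u then 1 else 0)\<bar>) / real (card A)"
    by simp
  also have "\<dots> \<le> sqrt (real CARD('u) * real (card A)) / real (card A)"
    using card_pos
    by (intro divide_right_mono expectation_l1_centered_sum_Pi_pmf_le[OF A(1) order_refl]) auto
  also have "\<dots> = sqrt (real CARD('u)) / sqrt (real (card A))"
    using card_pos by (simp add: real_sqrt_mult field_simps)
  finally show ?thesis .
qed

lemma abs_mult3_diff_le:
  fixes a b c a' b' c' :: real
  assumes "0 \<le> b" "0 \<le> a'" "0 \<le> b'"
  shows "\<bar>a * b * c - a' * b' * c'\<bar>
       \<le> \<bar>a - a'\<bar> * b * \<bar>c\<bar> + a' * \<bar>b - b'\<bar> * \<bar>c\<bar> + a' * b' * \<bar>c - c'\<bar>"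
proof -
  have "a * b * c - a' * b' * c' = (a - a') * b * c + a' * (b - b') * c + a' * b' * (c - c')"
    by algebra
  also have "\<bar>\<dots>\<bar> \<le> \<bar>(a - a') * b * c\<bar> + \<bar>a' * (b - b') * c\<bar> + \<bar>a' * b' * (c - c')\<bar>"
    by linarith
  finally show ?thesis
    using assms by (simp add: abs_mult)
qed

lemma sum_pmf_UNIV: "(\<Sum>u\<in>UNIV. pmf (p :: 'u::finite pmf) u) = 1"
  by (rule sum_pmf_eq_1) auto

lemma l1_self [simp]: "l1 p p = 0"
  by (simp add: l1_def)

lemma sum_pmf_mult_le:
  fixes f :: "'u::finite \<Rightarrow> real"
  assumes "\<And>u. f u \<le> B"
  shows "(\<Sum>u\<in>UNIV. pmf \<pi> u * f u) \<le> B"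
proof -
  have "(\<Sum>u\<in>UNIV. pmf \<pi> u * f u) \<le> (\<Sum>u\<in>UNIV. pmf \<pi> u * B)"
    using assms by (intro sum_mono mult_left_mono) auto
  then show ?thesis
    by (simp add: sum_distrib_right[symmetric] sum_pmf_UNIV)
qed

lemma sum_abs_mixture_diff_le:
  fixes c c' :: "'u::finite \<Rightarrow> real"
  assumes "0 \<le> a'" "\<And>u. \<bar>c u\<bar> \<le> M"
    and "M * l1 \<pi> \<pi>' + (\<Sum>u\<in>UNIV. pmf \<pi>' u * \<bar>c u - c' u\<bar>) \<le> \<beta>"
  shows "(\<Sum>u\<in>UNIV. \<bar>a * pmf \<pi> u * c u - a' * pmf \<pi>' u * c' u\<bar>) \<le> M * \<bar>a - a'\<bar> + a' * \<beta>"
proof -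
  have "(\<Sum>u\<in>UNIV. \<bar>a * pmf \<pi> u * c u - a' * pmf \<pi>' u * c' u\<bar>)
      \<le> (\<Sum>u\<in>UNIV. (M * \<bar>a - a'\<bar>) * pmf \<pi> u + (a' * M) * \<bar>pmf \<pi> u - pmf \<pi>' u\<bar>
           + a' * (pmf \<pi>' u * \<bar>c u - c' u\<bar>))"
  proof (intro sum_mono order_trans[OF abs_mult3_diff_le])
    fix u
    show "\<bar>a - a'\<bar> * pmf \<pi> u * \<bar>c u\<bar> + a' * \<bar>pmf \<pi> u - pmf \<pi>' u\<bar> * \<bar>c u\<bar> + a' * pmf \<pi>' u * \<bar>c u - c' u\<bar>
        \<le> (M * \<bar>a - a'\<bar>) * pmf \<pi> u + (a' * M) * \<bar>pmf \<pi> u - pmf \<pi>' u\<bar> + a' * (pmf \<pi>' u * \<bar>c u - c' u\<bar>)"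
      using assms(1) mult_left_mono[OF assms(2)[of u], of "\<bar>a - a'\<bar> * pmf \<pi> u"]
        mult_left_mono[OF assms(2)[of u], of "a' * \<bar>pmf \<pi> u - pmf \<pi>' u\<bar>"]
      by (simp add: algebra_simps)
  qed (use assms in auto)
  also have "\<dots> = M * \<bar>a - a'\<bar> + a' * (M * l1 \<pi> \<pi>' + (\<Sum>u\<in>UNIV. pmf \<pi>' u * \<bar>c u - c' u\<bar>))"
    by (simp only: sum.distrib sum_distrib_left[symmetric] sum_pmf_UNIV l1_def) (simp add: algebra_simps)
  also have "\<dots> \<le> M * \<bar>a - a'\<bar> + a' * \<beta>"
    using assms(1,3) by (intro add_left_mono mult_left_mono)
  finally show ?thesis .
qed

lemma l1_mixture_diff_le:
  fixes Q Q' :: "'u::finite \<Rightarrow> 'x::finite pmf"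
  assumes "0 \<le> a'" "l1 \<pi> \<pi>' + (\<Sum>u\<in>UNIV. pmf \<pi>' u * l1 (Q u) (Q' u)) \<le> \<beta>"
  shows "(\<Sum>x'\<in>UNIV. \<Sum>u\<in>UNIV. \<bar>a * pmf \<pi> u * pmf (Q u) x' - a' * pmf \<pi>' u * pmf (Q' u) x'\<bar>)
       \<le> \<bar>a - a'\<bar> + a' * \<beta>"
proof -
  have "(\<Sum>x'\<in>UNIV. \<Sum>u\<in>UNIV. \<bar>a * pmf \<pi> u * pmf (Q u) x' - a' * pmf \<pi>' u * pmf (Q' u) x'\<bar>)
      \<le> (\<Sum>x'\<in>UNIV. \<Sum>u\<in>UNIV. \<bar>a - a'\<bar> * pmf \<pi> u * pmf (Q u) x'
           + a' * \<bar>pmf \<pi> u - pmf \<pi>' u\<bar> * pmf (Q u) x' + a' * pmf \<pi>' u * \<bar>pmf (Q u) x' - pmf (Q' u) x'\<bar>)"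
    using assms by (intro sum_mono order_trans[OF abs_mult3_diff_le]) auto
  also have "\<dots> = \<bar>a - a'\<bar> + a' * (l1 \<pi> \<pi>' + (\<Sum>u\<in>UNIV. pmf \<pi>' u * l1 (Q u) (Q' u)))"
    by (simp add: sum.distrib sum_distrib_left[symmetric] sum_distrib_right[symmetric]
        sum.swap[of _ UNIV UNIV] sum_pmf_UNIV l1_def algebra_simps)
  also have "\<dots> \<le> \<bar>a - a'\<bar> + a' * \<beta>"
    using assms by (intro add_left_mono mult_left_mono)
  finally show ?thesis .
qed

lemma sampling_error_bound_le:
  fixes X U b n L :: real
  assumes "1 \<le> X" "1 \<le> U" "0 \<le> b" "b \<le> n" "0 \<le> L"
  shows "2 * sqrt (X * b) + b * L * (sqrt U / sqrt n) \<le> (2 + L) * sqrt (X * U) * sqrt b"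
proof -
  let ?R = "sqrt X * sqrt U * sqrt b"
  have "b / sqrt n \<le> sqrt b"
  proof (cases "b = 0")
    case False
    then have "0 < n" using assms by linarith
    moreover have "sqrt b * sqrt b \<le> sqrt b * sqrt n"
      using assms by (intro mult_left_mono) auto
    ultimately show ?thesis
      using assms by (simp add: divide_le_eq)
  qed simp
  then have "sqrt U * (b / sqrt n) \<le> sqrt U * sqrt b"
    by (rule mult_left_mono) (use assms in simp)
  also have "\<dots> = 1 * sqrt U * sqrt b"
    by simp
  also have "\<dots> \<le> ?R"
    using assms by (intro mult_right_mono) auto
  finally have actions: "b * (sqrt U / sqrt n) \<le> ?R"
    by (simp add: mult.commute)
  have "sqrt (X * b) = sqrt X * 1 * sqrt b"
    by (simp add: real_sqrt_mult)
  also have "\<dots> \<le> ?R"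
    using assms by (intro mult_right_mono mult_left_mono) auto
  finally have states: "sqrt (X * b) \<le> ?R" .
  have "2 * sqrt (X * b) + L * (b * (sqrt U / sqrt n)) \<le> 2 * ?R + L * ?R"
    using states actions assms(5) by (intro add_mono mult_left_mono) auto
  then show ?thesis
    by (simp add: real_sqrt_mult algebra_simps)
qed

lemma summable_discounted_bounded:
  fixes f :: "nat \<Rightarrow> real"
  assumes "0 \<le> \<gamma>" "\<gamma> < 1" "\<And>t. \<bar>f t\<bar> \<le> M"
  shows "summable (\<lambda>t. \<gamma> ^ t * f t)"
proof (rule summable_comparison_test')
  show "summable (\<lambda>t. M * \<gamma> ^ t)"
    using assms by (intro summable_mult summable_geometric) auto
  show "norm (\<gamma> ^ t * f t) \<le> M * \<gamma> ^ t" for t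
    using assms(3)[of t] assms(1) by (simp add: abs_mult mult.commute mult_right_mono)
qed

lemma linear_recurrence_le:
  fixes d :: "nat \<Rightarrow> real"
  assumes "d 0 \<le> 0" "\<And>t. d (Suc t) \<le> G + S * d t" "S > 1"
  shows "d t \<le> G * (S ^ t - 1) / (S - 1)"
proof (induction t)
  case 0
  then show ?case using assms(1) by simp
next
  case (Suc t)
  have "d (Suc t) \<le> G + S * (G * (S ^ t - 1) / (S - 1))"
    using assms(2)[of t] Suc assms(3) by (smt (verit) mult_left_mono)
  also have "\<dots> = G * (S ^ Suc t - 1) / (S - 1)"
    using assms(3) by (simp add: field_simps)
  finally show ?case .
qed

lemma discounted_geometric_sums:
  fixes \<gamma> S c E D :: real
  assumes "0 \<le> \<gamma>" "\<gamma> < 1" "0 \<le> S" "\<gamma> * S < 1"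
  shows "(\<lambda>t. \<gamma> ^ t * (c + (case t of 0 \<Rightarrow> 0 | Suc s \<Rightarrow> E + D * (S ^ s - 1)))) sums
           (c / (1 - \<gamma>) + \<gamma> * E / (1 - \<gamma>) + D * (\<gamma> / (1 - \<gamma> * S) - \<gamma> / (1 - \<gamma>)))"
proof -
  have geo: "(\<lambda>s. \<gamma> ^ s) sums (1 / (1 - \<gamma>))" "(\<lambda>s. (\<gamma> * S) ^ s) sums (1 / (1 - \<gamma> * S))"
    using assms by (auto intro!: geometric_sums simp: abs_of_nonneg)
  have "(\<lambda>s. (\<gamma> * (E - D)) * \<gamma> ^ s + (\<gamma> * D) * (\<gamma> * S) ^ s) sums
          ((\<gamma> * (E - D)) * (1 / (1 - \<gamma>)) + (\<gamma> * D) * (1 / (1 - \<gamma> * S)))"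
    by (intro sums_add sums_mult geo)
  then have "(\<lambda>s. \<gamma> ^ Suc s * (case Suc s of 0 \<Rightarrow> 0 | Suc s \<Rightarrow> E + D * (S ^ s - 1))) sums
          ((\<gamma> * (E - D)) * (1 / (1 - \<gamma>)) + (\<gamma> * D) * (1 / (1 - \<gamma> * S)))"
    by (simp add: power_mult_distrib algebra_simps)
  then have "(\<lambda>t. \<gamma> ^ t * (case t of 0 \<Rightarrow> 0 | Suc s \<Rightarrow> E + D * (S ^ s - 1))) sums
          ((\<gamma> * (E - D)) * (1 / (1 - \<gamma>)) + (\<gamma> * D) * (1 / (1 - \<gamma> * S)))"
    by (subst (asm) sums_Suc_iff) simp
  from sums_add[OF sums_mult[OF geo(1), of c] this] show ?thesis
    by (simp add: distrib_left algebra_simps divide_inverse)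
qed

section \<open>Laws on states and classes\<close>

definition class_supported :: "nat \<Rightarrow> ('x \<times> nat) pmf \<Rightarrow> bool" where
  "class_supported K \<mu> \<longleftrightarrow> (\<forall>z\<in>set_pmf \<mu>. snd z < K)"

lemma expectation_class_supported:
  fixes f :: "'x::finite \<times> nat \<Rightarrow> real"
  assumes "class_supported K \<mu>"
  shows "measure_pmf.expectation \<mu> f = (\<Sum>k<K. \<Sum>x\<in>UNIV. pmf \<mu> (x,k) * f (x,k))"
proof -
  have "measure_pmf.expectation \<mu> f = (\<Sum>z\<in>UNIV \<times> {..<K}. pmf \<mu> z * f z)"
    using assms by (subst integral_measure_pmf[of "UNIV \<times> {..<K}"]) (auto simp: class_supported_def)
  also have "\<dots> = (\<Sum>x\<in>UNIV. \<Sum>k<K. pmf \<mu> (x,k) * f (x,k))"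
    by (simp add: sum.cartesian_product)
  finally show ?thesis
    by (simp add: sum.swap[of _ UNIV])
qed

lemma sum_pmf_class_supported:
  "class_supported K \<mu> \<Longrightarrow> (\<Sum>k<K. \<Sum>x\<in>UNIV. pmf \<mu> ((x::'x::finite), k)) = 1"
  using expectation_class_supported[of K \<mu> "\<lambda>_. 1"] by simp

lemma pmf_bind_class_supported:
  fixes \<mu> :: "('x::finite \<times> nat) pmf"
  assumes "class_supported K \<mu>"
  shows "pmf (bind_pmf \<mu> g) z = (\<Sum>k<K. \<Sum>x\<in>UNIV. pmf \<mu> (x,k) * pmf (g (x,k)) z)"
  using assms by (simp add: pmf_bind expectation_class_supported)

lemma pmf_map_fst_class_supported:
  fixes \<mu> :: "('x::finite \<times> nat) pmf"
  assumes "class_supported K \<mu>"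
  shows "pmf (map_pmf fst \<mu>) x = (\<Sum>k<K. pmf \<mu> (x,k))"
  using assms
  by (simp add: map_pmf_def pmf_bind_class_supported pmf_return indicator_def
      if_distrib[of "\<lambda>t. _ * t"] sum.delta cong: if_cong)

lemma pmf_map_pmf_Pair_const:
  "pmf (map_pmf (\<lambda>x'. (x', k0)) Q) (x', k) = (if k0 = k then pmf Q x' else 0)"
proof (cases "k0 = k")
  case True
  then show ?thesis using pmf_map_inj'[of "\<lambda>x'. (x', k0)" Q x'] by (simp add: inj_def)
next
  case False
  then show ?thesis by (subst pmf_map_outside) auto
qed

lemma pmf_map_fst_nu_MF:
  fixes \<mu> :: "('x::finite \<times> nat) pmf"
  assumes "class_supported K \<mu>"
  shows "pmf (map_pmf fst (nu_MF d \<mu>)) u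
       = (\<Sum>k<K. \<Sum>x\<in>UNIV. pmf \<mu> (x,k) * pmf (d k x (map_pmf fst \<mu>)) u)"
proof -
  have "map_pmf fst (nu_MF d \<mu>) = bind_pmf \<mu> (\<lambda>z. d (snd z) (fst z) (map_pmf fst \<mu>))"
    unfolding nu_MF_def map_bind_pmf by (simp add: case_prod_unfold map_pmf_comp)
  then show ?thesis
    using assms by (simp add: pmf_bind_class_supported)
qed

lemma pmf_P_MF:
  fixes \<mu> :: "('x::finite \<times> nat) pmf" and d :: "nat \<Rightarrow> 'x \<Rightarrow> 'x pmf \<Rightarrow> 'u::finite pmf"
  assumes "class_supported K \<mu>" "k < K"
  shows "pmf (P_MF P d \<mu>) (x',k) = (\<Sum>x\<in>UNIV. \<Sum>u\<in>UNIV. pmf \<mu> (x,k) * pmf (d k x (map_pmf fst \<mu>)) u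
            * pmf (P k x u (map_pmf fst \<mu>) (map_pmf fst (nu_MF d \<mu>))) x')"
proof -
  define T where "T x = (\<Sum>u\<in>UNIV. pmf (d k x (map_pmf fst \<mu>)) u
      * pmf (P k x u (map_pmf fst \<mu>) (map_pmf fst (nu_MF d \<mu>))) x')" for x
  have class_k: "pmf (bind_pmf (d k0 x (map_pmf fst \<mu>)) (\<lambda>u. map_pmf (\<lambda>x'. (x', k0))
          (P k0 x u (map_pmf fst \<mu>) (map_pmf fst (nu_MF d \<mu>))))) (x',k)
      = (if k0 = k then T x else 0)" for k0 x
    by (cases "k0 = k") (simp_all add: pmf_bind expectation_eq_sum_UNIV pmf_map_pmf_Pair_const T_def)
  have "pmf (P_MF P d \<mu>) (x',k) = (\<Sum>k0<K. \<Sum>x\<in>UNIV. pmf \<mu> (x,k0) * (if k0 = k then T x else 0))"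
    unfolding P_MF_def pmf_bind_class_supported[OF assms(1)] by (simp add: class_k)
  also have "\<dots> = (\<Sum>x\<in>UNIV. pmf \<mu> (x,k) * T x)"
    using assms(2) by (subst sum.swap) (simp add: if_distrib[of "\<lambda>t. _ * t"] sum.delta cong: if_cong)
  finally show ?thesis
    by (simp add: T_def sum_distrib_left mult.assoc)
qed

lemma class_supported_P_MF:
  "class_supported K \<mu> \<Longrightarrow> class_supported K (P_MF P d \<mu>)"
  unfolding class_supported_def P_MF_def by (auto simp: case_prod_unfold)

lemma class_supported_mf_dist:
  "class_supported K mu0 \<Longrightarrow> class_supported K (mf_dist P pol mu0 t)"
  by (induction t) (simp_all add: class_supported_P_MF)

definition l1_joint :: "nat \<Rightarrow> ('x::finite \<times> nat) pmf \<Rightarrow> ('x \<times> nat) pmf \<Rightarrow> real" where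
  "l1_joint K \<mu> \<mu>' = (\<Sum>k<K. \<Sum>x\<in>UNIV. \<bar>pmf \<mu> (x,k) - pmf \<mu>' (x,k)\<bar>)"

definition l1_marg :: "nat \<Rightarrow> ('x::finite \<times> nat) pmf \<Rightarrow> ('x \<times> nat) pmf \<Rightarrow> real" where
  "l1_marg K \<mu> \<mu>' = (\<Sum>x\<in>UNIV. \<bar>(\<Sum>k<K. pmf \<mu> (x,k)) - (\<Sum>k<K. pmf \<mu>' (x,k))\<bar>)"

lemma l1_marg_le_l1_joint: "l1_marg K \<mu> \<mu>' \<le> l1_joint K \<mu> \<mu>'"
proof -
  have "l1_marg K \<mu> \<mu>' = (\<Sum>x\<in>UNIV. \<bar>\<Sum>k<K. pmf \<mu> (x,k) - pmf \<mu>' (x,k)\<bar>)"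
    by (simp add: l1_marg_def sum_subtractf)
  also have "\<dots> \<le> (\<Sum>x\<in>UNIV. \<Sum>k<K. \<bar>pmf \<mu> (x,k) - pmf \<mu>' (x,k)\<bar>)"
    by (intro sum_mono sum_abs)
  also have "\<dots> = l1_joint K \<mu> \<mu>'"
    unfolding l1_joint_def by (rule sum.swap)
  finally show ?thesis .
qed

lemma l1_joint_triangle: "l1_joint K \<mu> \<mu>'' \<le> l1_joint K \<mu> \<mu>' + l1_joint K \<mu>' \<mu>''"
  unfolding l1_joint_def sum.distrib[symmetric] by (intro sum_mono) linarith

lemma l1_marg_triangle: "l1_marg K \<mu> \<mu>'' \<le> l1_marg K \<mu> \<mu>' + l1_marg K \<mu>' \<mu>''"
  unfolding l1_marg_def sum.distrib[symmetric] by (intro sum_mono) linarith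

lemma l1_map_fst_eq_l1_marg:
  fixes \<mu> \<mu>' :: "('x::finite \<times> nat) pmf"
  assumes "class_supported K \<mu>" "class_supported K \<mu>'"
  shows "l1 (map_pmf fst \<mu>) (map_pmf fst \<mu>') = l1_marg K \<mu> \<mu>'"
  using assms by (simp add: l1_def l1_marg_def pmf_map_fst_class_supported)

lemma sum_classes_le_l1_joint:
  fixes \<mu> \<mu>' :: "('x::finite \<times> nat) pmf"
  assumes "class_supported K \<mu>'"
    and "\<And>k x. k < K \<Longrightarrow> G k x \<le> \<alpha> * \<bar>pmf \<mu> (x,k) - pmf \<mu>' (x,k)\<bar> + pmf \<mu>' (x,k) * \<beta>"
  shows "(\<Sum>k<K. \<Sum>x\<in>UNIV. G k x) \<le> \<alpha> * l1_joint K \<mu> \<mu>' + \<beta>"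
proof -
  have "(\<Sum>k<K. \<Sum>x\<in>UNIV. G k x)
      \<le> (\<Sum>k<K. \<Sum>x\<in>UNIV. \<alpha> * \<bar>pmf \<mu> (x,k) - pmf \<mu>' (x,k)\<bar> + pmf \<mu>' (x,k) * \<beta>)"
    using assms(2) by (intro sum_mono) auto
  also have "\<dots> = \<alpha> * l1_joint K \<mu> \<mu>' + \<beta>"
    using sum_pmf_class_supported[OF assms(1)]
    by (simp add: l1_joint_def sum.distrib sum_distrib_left sum_distrib_right[symmetric])
  finally show ?thesis .
qed

section \<open>Lipschitz continuity of the mean-field model\<close>

locale mf_model =
  fixes K :: nat
    and r :: "nat \<Rightarrow> 'x::finite \<Rightarrow> 'u::finite \<Rightarrow> 'x pmf \<Rightarrow> 'u pmf \<Rightarrow> real"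
    and P :: "nat \<Rightarrow> 'x \<Rightarrow> 'u \<Rightarrow> 'x pmf \<Rightarrow> 'u pmf \<Rightarrow> 'x pmf"
    and pol :: "nat \<Rightarrow> nat \<Rightarrow> 'x \<Rightarrow> 'x pmf \<Rightarrow> 'u pmf"
    and M_R L_R L_P L_Q :: real
  assumes M_R_nonneg: "0 \<le> M_R" and L_R_nonneg: "0 \<le> L_R"
    and L_P_nonneg: "0 \<le> L_P" and L_Q_nonneg: "0 \<le> L_Q"
    and r_bound: "\<And>k x u m n. k < K \<Longrightarrow> \<bar>r k x u m n\<bar> \<le> M_R"
    and r_lip: "\<And>k x u m1 n1 m2 n2. k < K \<Longrightarrow>
        \<bar>r k x u m1 n1 - r k x u m2 n2\<bar> \<le> L_R * (l1 m1 m2 + l1 n1 n2)"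
    and P_lip: "\<And>k x u m1 n1 m2 n2. k < K \<Longrightarrow>
        l1 (P k x u m1 n1) (P k x u m2 n2) \<le> L_P * (l1 m1 m2 + l1 n1 n2)"
    and pol_lip: "\<And>t k x m1 m2. k < K \<Longrightarrow>
        l1 (pol t k x m1) (pol t k x m2) \<le> L_Q * l1 m1 m2"
begin

abbreviation S_R :: real where "S_R \<equiv> M_R * (1 + L_Q) + L_R * (2 + L_Q)"
abbreviation S_P :: real where "S_P \<equiv> (1 + L_Q) + L_P * (2 + L_Q)"
abbreviation S_R' :: real where "S_R' \<equiv> M_R + L_R"
abbreviation S_R'' :: real where "S_R'' \<equiv> M_R * L_Q + L_R * (1 + L_Q)"
abbreviation S_P' :: real where "S_P' \<equiv> 1 + L_P"
abbreviation S_P'' :: real where "S_P'' \<equiv> L_Q + L_P * (1 + L_Q)"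

lemma S_R_eq: "S_R = S_R' + S_R''" and S_P_eq: "S_P = S_P' + S_P''"
  by (simp_all add: algebra_simps)

definition mf_reward :: "nat \<Rightarrow> ('x \<times> nat) pmf \<Rightarrow> real" where
  "mf_reward t \<mu> = (\<Sum>k<K. r_MF r (pol t) \<mu> k)"

lemma l1_nu_MF_le:
  assumes \<mu>: "class_supported K \<mu>" and \<mu>': "class_supported K \<mu>'"
  shows "l1 (map_pmf fst (nu_MF (pol t) \<mu>)) (map_pmf fst (nu_MF (pol t) \<mu>'))
         \<le> l1_joint K \<mu> \<mu>' + L_Q * l1_marg K \<mu> \<mu>'"
proof -
  let ?m = "map_pmf fst \<mu>" and ?m' = "map_pmf fst \<mu>'"
  let ?F = "\<lambda>k x u. pmf \<mu> (x,k) * pmf (pol t k x ?m) u * 1 - pmf \<mu>' (x,k) * pmf (pol t k x ?m') u * 1"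
  have "l1 (map_pmf fst (nu_MF (pol t) \<mu>)) (map_pmf fst (nu_MF (pol t) \<mu>'))
      = (\<Sum>u\<in>UNIV. \<bar>\<Sum>k<K. \<Sum>x\<in>UNIV. ?F k x u\<bar>)"
    using \<mu> \<mu>' by (simp add: l1_def pmf_map_fst_nu_MF sum_subtractf)
  also have "\<dots> \<le> (\<Sum>k<K. \<Sum>x\<in>UNIV. \<Sum>u\<in>UNIV. \<bar>?F k x u\<bar>)"
    by (intro order_trans[OF sum_mono[OF order_trans[OF sum_abs sum_mono[OF sum_abs]]]] eq_refl)
      (subst sum.swap, rule sum.cong[OF refl], rule sum.swap)
  also have "\<dots> \<le> 1 * l1_joint K \<mu> \<mu>' + L_Q * l1_marg K \<mu> \<mu>'"
  proof (rule sum_classes_le_l1_joint[OF \<mu>'])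
    fix k x assume "k < K"
    then have "l1 (pol t k x ?m) (pol t k x ?m') \<le> L_Q * l1_marg K \<mu> \<mu>'"
      using pol_lip[of k t x ?m ?m'] l1_map_fst_eq_l1_marg[OF \<mu> \<mu>'] by simp
    then show "(\<Sum>u\<in>UNIV. \<bar>?F k x u\<bar>)
        \<le> 1 * \<bar>pmf \<mu> (x,k) - pmf \<mu>' (x,k)\<bar> + pmf \<mu>' (x,k) * (L_Q * l1_marg K \<mu> \<mu>')"
      by (intro sum_abs_mixture_diff_le[OF pmf_nonneg]) simp_all
  qed
  finally show ?thesis
    by simp
qed

lemma l1_joint_P_MF_le:
  assumes \<mu>: "class_supported K \<mu>" and \<mu>': "class_supported K \<mu>'"
  shows "l1_joint K (P_MF P (pol t) \<mu>) (P_MF P (pol t) \<mu>')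
         \<le> S_P' * l1_joint K \<mu> \<mu>' + S_P'' * l1_marg K \<mu> \<mu>'"
proof -
  let ?m = "map_pmf fst \<mu>" and ?m' = "map_pmf fst \<mu>'"
  let ?n = "map_pmf fst (nu_MF (pol t) \<mu>)" and ?n' = "map_pmf fst (nu_MF (pol t) \<mu>')"
  let ?J = "l1_joint K \<mu> \<mu>'" and ?D = "l1_marg K \<mu> \<mu>'"
  let ?F = "\<lambda>k x x' u. pmf \<mu> (x,k) * pmf (pol t k x ?m) u * pmf (P k x u ?m ?n) x'
      - pmf \<mu>' (x,k) * pmf (pol t k x ?m') u * pmf (P k x u ?m' ?n') x'"
  have "l1_joint K (P_MF P (pol t) \<mu>) (P_MF P (pol t) \<mu>')
      = (\<Sum>k<K. \<Sum>x'\<in>UNIV. \<bar>\<Sum>x\<in>UNIV. \<Sum>u\<in>UNIV. ?F k x x' u\<bar>)"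
    unfolding l1_joint_def using \<mu> \<mu>' by (intro sum.cong refl) (simp add: pmf_P_MF sum_subtractf)
  also have "\<dots> \<le> (\<Sum>k<K. \<Sum>x\<in>UNIV. \<Sum>x'\<in>UNIV. \<Sum>u\<in>UNIV. \<bar>?F k x x' u\<bar>)"
    by (intro order_trans[OF sum_mono[OF sum_mono[OF order_trans[OF sum_abs sum_mono[OF sum_abs]]]]]
        eq_refl sum.cong refl sum.swap)
  also have "\<dots> \<le> 1 * ?J + (L_Q * ?D + L_P * (?D + l1 ?n ?n'))"
  proof (rule sum_classes_le_l1_joint[OF \<mu>'])
    fix k x assume "k < K"
    then have "l1 (pol t k x ?m) (pol t k x ?m') \<le> L_Q * ?D"
      and "l1 (P k x u ?m ?n) (P k x u ?m' ?n') \<le> L_P * (?D + l1 ?n ?n')" for u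
      using pol_lip[of k t x ?m ?m'] P_lip[of k x u ?m ?n ?m' ?n'] l1_map_fst_eq_l1_marg[OF \<mu> \<mu>']
      by simp_all
    then have "l1 (pol t k x ?m) (pol t k x ?m')
        + (\<Sum>u\<in>UNIV. pmf (pol t k x ?m') u * l1 (P k x u ?m ?n) (P k x u ?m' ?n'))
        \<le> L_Q * ?D + L_P * (?D + l1 ?n ?n')"
      by (intro add_mono sum_pmf_mult_le)
    then show "(\<Sum>x'\<in>UNIV. \<Sum>u\<in>UNIV. \<bar>?F k x x' u\<bar>)
        \<le> 1 * \<bar>pmf \<mu> (x,k) - pmf \<mu>' (x,k)\<bar> + pmf \<mu>' (x,k) * (L_Q * ?D + L_P * (?D + l1 ?n ?n'))"
      unfolding mult_1 by (rule l1_mixture_diff_le[OF pmf_nonneg])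
  qed
  also have "\<dots> \<le> ?J + (L_Q * ?D + L_P * (?D + (?J + L_Q * ?D)))"
    using l1_nu_MF_le[OF \<mu> \<mu>', of t] L_P_nonneg by (simp add: mult_left_mono)
  also have "\<dots> = S_P' * ?J + S_P'' * ?D"
    by (simp add: algebra_simps)
  finally show ?thesis .
qed

lemma mf_reward_diff_le:
  assumes \<mu>: "class_supported K \<mu>" and \<mu>': "class_supported K \<mu>'"
  shows "\<bar>mf_reward t \<mu> - mf_reward t \<mu>'\<bar>
         \<le> S_R' * l1_joint K \<mu> \<mu>' + S_R'' * l1_marg K \<mu> \<mu>'"
proof -
  let ?m = "map_pmf fst \<mu>" and ?m' = "map_pmf fst \<mu>'"
  let ?n = "map_pmf fst (nu_MF (pol t) \<mu>)" and ?n' = "map_pmf fst (nu_MF (pol t) \<mu>')"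
  let ?J = "l1_joint K \<mu> \<mu>'" and ?D = "l1_marg K \<mu> \<mu>'"
  let ?F = "\<lambda>k x u. pmf \<mu> (x,k) * pmf (pol t k x ?m) u * r k x u ?m ?n
      - pmf \<mu>' (x,k) * pmf (pol t k x ?m') u * r k x u ?m' ?n'"
  have "\<bar>mf_reward t \<mu> - mf_reward t \<mu>'\<bar> = \<bar>\<Sum>k<K. \<Sum>x\<in>UNIV. \<Sum>u\<in>UNIV. ?F k x u\<bar>"
    by (simp add: mf_reward_def r_MF_def sum_subtractf)
  also have "\<dots> \<le> (\<Sum>k<K. \<Sum>x\<in>UNIV. \<Sum>u\<in>UNIV. \<bar>?F k x u\<bar>)"
    by (intro order_trans[OF sum_abs] sum_mono order_trans[OF sum_abs]) auto
  also have "\<dots> \<le> M_R * ?J + (M_R * (L_Q * ?D) + L_R * (?D + l1 ?n ?n'))"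
  proof (rule sum_classes_le_l1_joint[OF \<mu>'])
    fix k x assume "k < K"
    then have lip_pol: "l1 (pol t k x ?m) (pol t k x ?m') \<le> L_Q * ?D"
      and lip_r: "\<bar>r k x u ?m ?n - r k x u ?m' ?n'\<bar> \<le> L_R * (?D + l1 ?n ?n')"
      and bound_r: "\<bar>r k x u ?m ?n\<bar> \<le> M_R" for u
      using pol_lip[of k t x ?m ?m'] r_lip[of k x u ?m ?n ?m' ?n'] r_bound[of k x u ?m ?n]
        l1_map_fst_eq_l1_marg[OF \<mu> \<mu>']
      by simp_all
    have "M_R * l1 (pol t k x ?m) (pol t k x ?m')
        + (\<Sum>u\<in>UNIV. pmf (pol t k x ?m') u * \<bar>r k x u ?m ?n - r k x u ?m' ?n'\<bar>)
        \<le> M_R * (L_Q * ?D) + L_R * (?D + l1 ?n ?n')"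
      using M_R_nonneg lip_pol lip_r by (intro add_mono mult_left_mono sum_pmf_mult_le)
    then show "(\<Sum>u\<in>UNIV. \<bar>?F k x u\<bar>)
        \<le> M_R * \<bar>pmf \<mu> (x,k) - pmf \<mu>' (x,k)\<bar> + pmf \<mu>' (x,k) * (M_R * (L_Q * ?D) + L_R * (?D + l1 ?n ?n'))"
      by (rule sum_abs_mixture_diff_le[OF pmf_nonneg bound_r])
  qed
  also have "\<dots> \<le> M_R * ?J + (M_R * (L_Q * ?D) + L_R * (?D + (?J + L_Q * ?D)))"
    using l1_nu_MF_le[OF \<mu> \<mu>', of t] L_R_nonneg by (simp add: mult_left_mono)
  also have "\<dots> = S_R' * ?J + S_R'' * ?D"
    by (simp add: algebra_simps)
  finally show ?thesis .
qed

lemma abs_mf_reward_le: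
  assumes "class_supported K \<mu>"
  shows "\<bar>mf_reward t \<mu>\<bar> \<le> M_R"
proof -
  let ?m = "map_pmf fst \<mu>" and ?n = "map_pmf fst (nu_MF (pol t) \<mu>)"
  have "\<bar>mf_reward t \<mu>\<bar> \<le> (\<Sum>k<K. \<Sum>x\<in>UNIV. \<Sum>u\<in>UNIV. \<bar>pmf \<mu> (x,k) * pmf (pol t k x ?m) u * r k x u ?m ?n\<bar>)"
    unfolding mf_reward_def r_MF_def
    by (intro order_trans[OF sum_abs] sum_mono order_trans[OF sum_abs] sum_abs)
  also have "\<dots> \<le> (\<Sum>k<K. \<Sum>x\<in>UNIV. \<Sum>u\<in>UNIV. pmf \<mu> (x,k) * pmf (pol t k x ?m) u * M_R)"
    using r_bound by (intro sum_mono) (simp add: abs_mult mult_left_mono)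
  also have "\<dots> = M_R"
    using sum_pmf_class_supported[OF assms]
    by (simp add: sum_distrib_right[symmetric] sum_distrib_left[symmetric] sum_pmf_UNIV mult.assoc)
  finally show ?thesis .
qed

end

section \<open>The \<open>N\<close>-agent system\<close>

lemma agents_eq_UN: "agents K N = (\<Union>k<K. (\<lambda>j. (j,k)) ` {..<N k})"
  by (auto simp: agents_def)

lemma finite_agents [simp]: "finite (agents K N)"
  by (simp add: agents_eq_UN)

lemma card_agents: "card (agents K N) = Npop K N"
proof -
  have "card (agents K N) = (\<Sum>k<K. card ((\<lambda>j. (j,k)) ` {..<N k}))"
    unfolding agents_eq_UN by (intro card_UN_disjoint) auto
  also have "\<dots> = (\<Sum>k<K. N k)"
    by (simp add: card_image inj_on_def)
  finally show ?thesis
    by (simp add: Npop_def)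
qed

lemma snd_in_agents: "a \<in> agents K N \<Longrightarrow> snd a < K"
  by (auto simp: agents_def)

lemma card_agents_of_class: "k < K \<Longrightarrow> card {a \<in> agents K N. snd a = k} = N k"
proof -
  assume "k < K"
  then have "{a \<in> agents K N. snd a = k} = (\<lambda>j. (j,k)) ` {..<N k}"
    by (auto simp: agents_def)
  then show ?thesis
    by (simp add: card_image inj_on_def)
qed

lemma sum_agents_by_class:
  "(\<Sum>k<K. \<Sum>a\<in>{a \<in> agents K N. snd a = k}. G a k) = (\<Sum>a\<in>agents K N. G a (snd a))"
proof -
  have "(\<Sum>k<K. \<Sum>a\<in>{a \<in> agents K N. snd a = k}. G a k)
      = (\<Sum>a\<in>agents K N. \<Sum>k<K. if snd a = k then G a k else 0)"
    by (subst sum.swap) (simp add: sum.inter_filter)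
  also have "\<dots> = (\<Sum>a\<in>agents K N. G a (snd a))"
    by (intro sum.cong refl) (simp add: snd_in_agents sum.delta')
  finally show ?thesis .
qed

locale mf_population = mf_model K r P pol M_R L_R L_P L_Q
  for K :: nat
    and r :: "nat \<Rightarrow> 'x::finite \<Rightarrow> 'u::finite \<Rightarrow> 'x pmf \<Rightarrow> 'u pmf \<Rightarrow> real"
    and P pol M_R L_R L_P L_Q +
  fixes N :: "nat \<Rightarrow> nat"
  assumes K_pos: "1 \<le> K" and N_pos: "\<And>k. k < K \<Longrightarrow> 1 \<le> N k"
begin

abbreviation \<A> :: "(nat \<times> nat) set" where
  "\<A> \<equiv> agents K N"

abbreviation n_pop :: real where
  "n_pop \<equiv> real (Npop K N)"

lemma agents_nonempty: "\<A> \<noteq> {}"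
proof -
  have "(0, 0) \<in> \<A>"
    using K_pos N_pos[of 0] by (simp add: agents_def)
  then show ?thesis by blast
qed

lemma n_pop_pos: "0 < n_pop"
  using agents_nonempty by (simp flip: card_agents add: card_gt_0_iff)

definition emp_joint :: "(nat \<times> nat \<Rightarrow> 'x) \<Rightarrow> ('x \<times> nat) pmf" where
  "emp_joint xs = emp \<A> (\<lambda>a. (xs a, snd a))"

lemma class_supported_emp_joint: "class_supported K (emp_joint xs)"
  using agents_nonempty by (auto simp: class_supported_def emp_joint_def emp_def snd_in_agents)

lemma map_fst_emp_joint: "map_pmf fst (emp_joint xs) = emp \<A> xs"
  by (simp add: emp_joint_def emp_def map_pmf_comp)

lemma pmf_emp_joint:
  "pmf (emp_joint xs) (x,k) = (\<Sum>a\<in>{a \<in> \<A>. snd a = k}. if xs a = x then 1 else 0) / n_pop"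
proof -
  have "pmf (emp_joint xs) (x,k) = (\<Sum>a\<in>\<A>. if (xs a, snd a) = (x,k) then 1 else 0) / n_pop"
    using agents_nonempty by (simp add: emp_joint_def pmf_emp card_agents)
  also have "(\<Sum>a\<in>\<A>. if (xs a, snd a) = (x,k) then 1 else 0 :: real)
      = (\<Sum>a\<in>\<A>. if snd a = k then (if xs a = x then 1 else 0) else 0)"
    by (intro sum.cong) auto
  also have "\<dots> = (\<Sum>a\<in>{a \<in> \<A>. snd a = k}. if xs a = x then 1 else 0)"
    by (rule sum.inter_filter[symmetric]) simp
  finally show ?thesis .
qed

lemma sum_pmf_emp_joint_class:
  "(\<Sum>x\<in>UNIV. pmf (emp_joint xs) (x,k) * F x) = (\<Sum>a\<in>{a \<in> \<A>. snd a = k}. F (xs a)) / n_pop"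
proof -
  have "(\<Sum>x\<in>UNIV. pmf (emp_joint xs) (x,k) * F x)
      = (\<Sum>x\<in>UNIV. \<Sum>a\<in>{a \<in> \<A>. snd a = k}. if xs a = x then F x else 0) / n_pop"
    by (simp add: pmf_emp_joint sum_divide_distrib sum_distrib_right if_distrib[of "\<lambda>t. t * _"] cong: if_cong)
  also have "\<dots> = (\<Sum>a\<in>{a \<in> \<A>. snd a = k}. F (xs a)) / n_pop"
    by (subst sum.swap) (simp add: sum.delta)
  finally show ?thesis .
qed

lemma sum_pmf_emp_joint:
  "(\<Sum>k<K. \<Sum>x\<in>UNIV. pmf (emp_joint xs) (x,k) * F x k) = (\<Sum>a\<in>\<A>. F (xs a) (snd a)) / n_pop"
  by (simp add: sum_pmf_emp_joint_class sum_divide_distrib[symmetric] sum_agents_by_class)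

lemma finite_set_act_dist: "finite (set_pmf (act_dist K N pol t xs))"
  unfolding act_dist_def by (intro finite_set_Pi_pmf) auto

lemma finite_set_next_dist: "finite (set_pmf (next_dist K N P xs us))"
  unfolding next_dist_def by (intro finite_set_Pi_pmf) auto

lemma finite_set_state_dist: "finite (set_pmf (state_dist K N P pol x0 t))"
  by (induction t) (simp_all add: finite_set_act_dist finite_set_next_dist)

definition act_law :: "nat \<Rightarrow> (nat \<times> nat \<Rightarrow> 'x) \<Rightarrow> nat \<times> nat \<Rightarrow> 'u pmf" where
  "act_law t xs a = pol t (snd a) (xs a) (emp \<A> xs)"

definition mf_act_marg :: "nat \<Rightarrow> (nat \<times> nat \<Rightarrow> 'x) \<Rightarrow> 'u pmf" where
  "mf_act_marg t xs = map_pmf fst (nu_MF (pol t) (emp_joint xs))"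

lemma act_dist_eq_Pi_pmf: "act_dist K N pol t xs = Pi_pmf \<A> undefined (act_law t xs)"
  by (simp add: act_dist_def act_law_def[abs_def])

lemma pmf_mf_act_marg: "pmf (mf_act_marg t xs) u = (\<Sum>a\<in>\<A>. pmf (act_law t xs a) u) / n_pop"
  by (simp add: mf_act_marg_def pmf_map_fst_nu_MF[OF class_supported_emp_joint] map_fst_emp_joint
      sum_pmf_emp_joint act_law_def)

lemma expectation_l1_emp_actions_le:
  "measure_pmf.expectation (act_dist K N pol t xs) (\<lambda>us. l1 (emp \<A> us) (mf_act_marg t xs))
   \<le> sqrt (real CARD('u)) / sqrt n_pop"
  unfolding act_dist_eq_Pi_pmf
  using expectation_l1_emp_Pi_pmf_le[OF finite_agents agents_nonempty, of "mf_act_marg t xs"]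
  by (simp add: pmf_mf_act_marg card_agents)

definition emp_reward :: "nat \<Rightarrow> (nat \<times> nat \<Rightarrow> 'x) \<Rightarrow> real" where
  "emp_reward t xs = measure_pmf.expectation (act_dist K N pol t xs)
      (\<lambda>us. (\<Sum>a\<in>\<A>. r (snd a) (xs a) (us a) (emp \<A> xs) (emp \<A> us)) / n_pop)"

lemma mf_reward_emp_joint:
  "mf_reward t (emp_joint xs) = measure_pmf.expectation (act_dist K N pol t xs)
      (\<lambda>us. (\<Sum>a\<in>\<A>. r (snd a) (xs a) (us a) (emp \<A> xs) (mf_act_marg t xs)) / n_pop)"
proof -
  let ?\<nu> = "mf_act_marg t xs"
  have "mf_reward t (emp_joint xs)
      = (\<Sum>a\<in>\<A>. \<Sum>u\<in>UNIV. pmf (act_law t xs a) u * r (snd a) (xs a) u (emp \<A> xs) ?\<nu>) / n_pop"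
    unfolding mf_reward_def r_MF_def map_fst_emp_joint mf_act_marg_def
    by (simp add: mult.assoc sum_distrib_left[symmetric] sum_pmf_emp_joint act_law_def)
  also have "\<dots> = (\<Sum>a\<in>\<A>. measure_pmf.expectation (act_dist K N pol t xs)
                      (\<lambda>us. r (snd a) (xs a) (us a) (emp \<A> xs) ?\<nu>)) / n_pop"
  proof (intro arg_cong2[where f = "(/)"] sum.cong refl)
    fix a assume "a \<in> \<A>"
    then show "(\<Sum>u\<in>UNIV. pmf (act_law t xs a) u * r (snd a) (xs a) u (emp \<A> xs) ?\<nu>)
        = measure_pmf.expectation (act_dist K N pol t xs) (\<lambda>us. r (snd a) (xs a) (us a) (emp \<A> xs) ?\<nu>)"
      unfolding act_dist_eq_Pi_pmf
      using expectation_Pi_pmf_component[OF finite_agents \<open>a \<in> \<A>\<close>, of undefined "act_law t xs"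
          "\<lambda>u. r (snd a) (xs a) u (emp \<A> xs) ?\<nu>"]
      by (simp add: expectation_eq_sum_UNIV)
  qed
  also have "\<dots> = measure_pmf.expectation (act_dist K N pol t xs)
      (\<lambda>us. (\<Sum>a\<in>\<A>. r (snd a) (xs a) (us a) (emp \<A> xs) ?\<nu>) / n_pop)"
    using finite_set_act_dist by (simp add: integrable_measure_pmf_finite)
  finally show ?thesis .
qed

lemma emp_reward_diff_le:
  "\<bar>emp_reward t xs - mf_reward t (emp_joint xs)\<bar> \<le> L_R * (sqrt (real CARD('u)) / sqrt n_pop)"
proof -
  let ?p = "act_dist K N pol t xs" and ?\<nu> = "mf_act_marg t xs"
  let ?d = "\<lambda>us. (\<Sum>a\<in>\<A>. r (snd a) (xs a) (us a) (emp \<A> xs) (emp \<A> us)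
                          - r (snd a) (xs a) (us a) (emp \<A> xs) ?\<nu>) / n_pop"
  have pointwise: "\<bar>?d us\<bar> \<le> L_R * l1 (emp \<A> us) ?\<nu>" for us
  proof -
    have "\<bar>\<Sum>a\<in>\<A>. r (snd a) (xs a) (us a) (emp \<A> xs) (emp \<A> us)
                - r (snd a) (xs a) (us a) (emp \<A> xs) ?\<nu>\<bar> \<le> (\<Sum>a\<in>\<A>. L_R * l1 (emp \<A> us) ?\<nu>)"
    proof (intro order_trans[OF sum_abs] sum_mono)
      fix a assume "a \<in> \<A>"
      then show "\<bar>r (snd a) (xs a) (us a) (emp \<A> xs) (emp \<A> us)
                - r (snd a) (xs a) (us a) (emp \<A> xs) ?\<nu>\<bar> \<le> L_R * l1 (emp \<A> us) ?\<nu>"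
        using r_lip[of "snd a" "xs a" "us a" "emp \<A> xs" "emp \<A> us" "emp \<A> xs" ?\<nu>] snd_in_agents
        by simp
    qed
    also have "\<dots> = n_pop * (L_R * l1 (emp \<A> us) ?\<nu>)"
      by (simp add: card_agents)
    finally show ?thesis
      using n_pop_pos by (simp add: abs_divide pos_divide_le_eq mult.commute)
  qed
  have "\<bar>emp_reward t xs - mf_reward t (emp_joint xs)\<bar> = \<bar>measure_pmf.expectation ?p ?d\<bar>"
    unfolding emp_reward_def mf_reward_emp_joint using finite_set_act_dist
    by (simp add: integrable_measure_pmf_finite sum_subtractf diff_divide_distrib)
  also have "\<dots> \<le> measure_pmf.expectation ?p (\<lambda>us. L_R * l1 (emp \<A> us) ?\<nu>)"
    using finite_set_act_dist pointwise
    by (intro order_trans[OF integral_abs_bound] integral_mono) (simp_all add: integrable_measure_pmf_finite)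
  also have "\<dots> \<le> L_R * (sqrt (real CARD('u)) / sqrt n_pop)"
    using expectation_l1_emp_actions_le[of t xs] L_R_nonneg
    by (simp only: Bochner_Integration.integral_mult_right_zero mult_left_mono)
  finally show ?thesis .
qed

definition next_law :: "(nat \<times> nat \<Rightarrow> 'x) \<Rightarrow> (nat \<times> nat \<Rightarrow> 'u) \<Rightarrow> nat \<times> nat \<Rightarrow> 'x pmf" where
  "next_law xs us a = P (snd a) (xs a) (us a) (emp \<A> xs) (emp \<A> us)"

definition mf_next_law :: "nat \<Rightarrow> (nat \<times> nat \<Rightarrow> 'x) \<Rightarrow> nat \<times> nat \<Rightarrow> 'u \<Rightarrow> 'x pmf" where
  "mf_next_law t xs a u = P (snd a) (xs a) u (emp \<A> xs) (mf_act_marg t xs)"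

definition mf_count :: "nat \<Rightarrow> (nat \<times> nat \<Rightarrow> 'x) \<Rightarrow> (nat \<times> nat) set \<Rightarrow> 'x \<Rightarrow> real" where
  "mf_count t xs B x' = (\<Sum>a\<in>B. \<Sum>u\<in>UNIV. pmf (act_law t xs a) u * pmf (mf_next_law t xs a u) x')"

definition step :: "nat \<Rightarrow> (nat \<times> nat \<Rightarrow> 'x) \<Rightarrow> (nat \<times> nat \<Rightarrow> 'x) pmf" where
  "step t xs = bind_pmf (act_dist K N pol t xs) (next_dist K N P xs)"

lemma finite_set_step: "finite (set_pmf (step t xs))"
  by (simp add: step_def finite_set_act_dist finite_set_next_dist)

lemma state_dist_Suc_step: "state_dist K N P pol x0 (Suc t) = bind_pmf (state_dist K N P pol x0 t) (step t)"
  by (simp add: step_def[abs_def])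

definition next_sampling_error ::
  "(nat \<times> nat \<Rightarrow> 'x) \<Rightarrow> (nat \<times> nat \<Rightarrow> 'u) \<Rightarrow> (nat \<times> nat) set \<Rightarrow> (nat \<times> nat \<Rightarrow> 'x) \<Rightarrow> real" where
  "next_sampling_error xs us B xs'
     = (\<Sum>x'\<in>UNIV. \<bar>\<Sum>a\<in>B. (if xs' a = x' then 1 else 0) - pmf (next_law xs us a) x'\<bar>)"

definition action_sampling_error ::
  "nat \<Rightarrow> (nat \<times> nat \<Rightarrow> 'x) \<Rightarrow> (nat \<times> nat) set \<Rightarrow> (nat \<times> nat \<Rightarrow> 'u) \<Rightarrow> real" where
  "action_sampling_error t xs B us = (\<Sum>x'\<in>UNIV. \<bar>\<Sum>a\<in>B. pmf (mf_next_law t xs a (us a)) x'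
      - measure_pmf.expectation (act_law t xs a) (\<lambda>u. pmf (mf_next_law t xs a u) x')\<bar>)"

lemma expectation_next_sampling_error_le:
  assumes "B \<subseteq> \<A>"
  shows "measure_pmf.expectation (next_dist K N P xs us) (next_sampling_error xs us B)
         \<le> sqrt (real CARD('x) * real (card B))"
proof -
  have "measure_pmf.expectation (Pi_pmf \<A> undefined (next_law xs us))
           (\<lambda>xs'. \<Sum>x'\<in>UNIV. \<bar>\<Sum>a\<in>B. (if xs' a = x' then 1 else 0)
              - measure_pmf.expectation (next_law xs us a) (\<lambda>y. if y = x' then 1 else 0)\<bar>)
         \<le> sqrt (real CARD('x) * real (card B))"
    using assms by (intro expectation_l1_centered_sum_Pi_pmf_le) auto
  then show ?thesis
    by (simp add: next_dist_def next_law_def[abs_def] next_sampling_error_def[abs_def]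
        expectation_indicator_pmf)
qed

lemma next_law_deviation_le:
  assumes "B \<subseteq> \<A>"
  shows "(\<Sum>x'\<in>UNIV. \<bar>(\<Sum>a\<in>B. pmf (next_law xs us a) x') - (\<Sum>a\<in>B. pmf (mf_next_law t xs a (us a)) x')\<bar>)
         \<le> real (card B) * L_P * l1 (emp \<A> us) (mf_act_marg t xs)"
proof -
  have "(\<Sum>x'\<in>UNIV. \<bar>(\<Sum>a\<in>B. pmf (next_law xs us a) x') - (\<Sum>a\<in>B. pmf (mf_next_law t xs a (us a)) x')\<bar>)
      \<le> (\<Sum>x'\<in>UNIV. \<Sum>a\<in>B. \<bar>pmf (next_law xs us a) x' - pmf (mf_next_law t xs a (us a)) x'\<bar>)"
    by (intro sum_mono) (simp add: sum_subtractf[symmetric] sum_abs)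
  also have "\<dots> = (\<Sum>a\<in>B. l1 (next_law xs us a) (mf_next_law t xs a (us a)))"
    unfolding l1_def by (rule sum.swap)
  also have "\<dots> \<le> (\<Sum>a\<in>B. L_P * l1 (emp \<A> us) (mf_act_marg t xs))"
  proof (intro sum_mono)
    fix a assume "a \<in> B"
    then have "a \<in> \<A>"
      using assms by auto
    then have "snd a < K"
      by (rule snd_in_agents)
    then show "l1 (next_law xs us a) (mf_next_law t xs a (us a)) \<le> L_P * l1 (emp \<A> us) (mf_act_marg t xs)"
      using P_lip[of "snd a" "xs a" "us a" "emp \<A> xs" "emp \<A> us" "emp \<A> xs" "mf_act_marg t xs"]
      by (simp add: next_law_def mf_next_law_def)
  qed
  finally show ?thesis
    by simp
qed

lemma expectation_action_sampling_error_le: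
  assumes "B \<subseteq> \<A>"
  shows "measure_pmf.expectation (act_dist K N pol t xs) (action_sampling_error t xs B)
         \<le> sqrt (real CARD('x) * real (card B))"
  unfolding act_dist_eq_Pi_pmf action_sampling_error_def[abs_def]
  using assms by (intro expectation_l1_centered_sum_Pi_pmf_le) (auto simp: sum_pmf_UNIV)

lemma count_deviation_le_split:
  assumes "B \<subseteq> \<A>"
  shows "(\<Sum>x'\<in>UNIV. \<bar>(\<Sum>a\<in>B. if xs' a = x' then 1 else 0) - mf_count t xs B x'\<bar>)
      \<le> next_sampling_error xs us B xs' + real (card B) * L_P * l1 (emp \<A> us) (mf_act_marg t xs)
        + action_sampling_error t xs B us"
proof -
  have "(\<Sum>x'\<in>UNIV. \<bar>(\<Sum>a\<in>B. if xs' a = x' then 1 else 0) - mf_count t xs B x'\<bar>)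
     \<le> next_sampling_error xs us B xs' + (\<Sum>x'\<in>UNIV. \<bar>(\<Sum>a\<in>B. pmf (next_law xs us a) x')
          - (\<Sum>a\<in>B. pmf (mf_next_law t xs a (us a)) x')\<bar>) + action_sampling_error t xs B us"
    unfolding next_sampling_error_def action_sampling_error_def sum.distrib[symmetric]
    by (intro sum_mono) (simp add: mf_count_def expectation_eq_sum_UNIV sum_subtractf)
  then show ?thesis
    using next_law_deviation_le[OF assms, of xs us t] by linarith
qed

lemma expectation_count_deviation_le:
  assumes B: "B \<subseteq> \<A>"
  shows "measure_pmf.expectation (step t xs)
           (\<lambda>xs'. \<Sum>x'\<in>UNIV. \<bar>(\<Sum>a\<in>B. if xs' a = x' then 1 else 0) - mf_count t xs B x'\<bar>)
         \<le> (2 + L_P) * sqrt (real CARD('x) * real CARD('u)) * sqrt (real (card B))"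
proof -
  let ?p = "act_dist K N pol t xs" and ?\<nu> = "mf_act_marg t xs" and ?c = "sqrt (real CARD('x) * real (card B))"
  have int: "integrable (measure_pmf ?p) f" "integrable (measure_pmf (next_dist K N P xs us)) g"
    for f g :: "_ \<Rightarrow> real" and us
    by (simp_all add: integrable_measure_pmf_finite finite_set_act_dist finite_set_next_dist)
  have "measure_pmf.expectation (step t xs)
           (\<lambda>xs'. \<Sum>x'\<in>UNIV. \<bar>(\<Sum>a\<in>B. if xs' a = x' then 1 else 0) - mf_count t xs B x'\<bar>)
      \<le> measure_pmf.expectation ?p (\<lambda>us. measure_pmf.expectation (next_dist K N P xs us)
           (\<lambda>xs'. next_sampling_error xs us B xs' + real (card B) * L_P * l1 (emp \<A> us) ?\<nu>
                   + action_sampling_error t xs B us))"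
    unfolding step_def expectation_bind_pmf_finite[OF finite_set_act_dist finite_set_next_dist]
    using count_deviation_le_split[OF B] int by (intro integral_mono) simp_all
  also have "\<dots> \<le> measure_pmf.expectation ?p (\<lambda>us. ?c + real (card B) * L_P * l1 (emp \<A> us) ?\<nu>
                   + action_sampling_error t xs B us)"
    using expectation_next_sampling_error_le[OF B] int by (intro integral_mono) simp_all
  also have "\<dots> = ?c + real (card B) * L_P * measure_pmf.expectation ?p (\<lambda>us. l1 (emp \<A> us) ?\<nu>)
      + measure_pmf.expectation ?p (action_sampling_error t xs B)"
    by (simp add: int)
  also have "\<dots> \<le> ?c + real (card B) * L_P * (sqrt (real CARD('u)) / sqrt n_pop) + ?c"
    using expectation_l1_emp_actions_le expectation_action_sampling_error_le[OF B] L_P_nonneg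
    by (intro add_mono mult_left_mono order_refl) auto
  also have "\<dots> \<le> (2 + L_P) * sqrt (real CARD('x) * real CARD('u)) * sqrt (real (card B))"
  proof -
    have "card B \<le> card \<A>"
      using B by (intro card_mono) auto
    then show ?thesis
      using sampling_error_bound_le[of "real CARD('x)" "real CARD('u)" "real (card B)" n_pop L_P] L_P_nonneg
      by (simp add: card_agents)
  qed
  finally show ?thesis .
qed

lemma pmf_P_MF_emp_joint:
  assumes "k < K"
  shows "pmf (P_MF P (pol t) (emp_joint xs)) (x',k) = mf_count t xs {a \<in> \<A>. snd a = k} x' / n_pop"
proof -
  have "pmf (P_MF P (pol t) (emp_joint xs)) (x',k)
      = (\<Sum>x\<in>UNIV. pmf (emp_joint xs) (x,k) * (\<Sum>u\<in>UNIV. pmf (pol t k x (emp \<A> xs)) u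
           * pmf (P k x u (emp \<A> xs) (mf_act_marg t xs)) x'))"
    by (simp add: pmf_P_MF[OF class_supported_emp_joint assms] map_fst_emp_joint mf_act_marg_def
        sum_distrib_left mult.assoc)
  also have "\<dots> = mf_count t xs {a \<in> \<A>. snd a = k} x' / n_pop"
    unfolding sum_pmf_emp_joint_class mf_count_def
    by (intro arg_cong2[where f = "(/)"] sum.cong refl) (auto simp: act_law_def mf_next_law_def)
  finally show ?thesis .
qed

lemma abs_diff_div_n_pop: "\<bar>a / n_pop - b / n_pop\<bar> = \<bar>a - b\<bar> / n_pop"
  using n_pop_pos by (simp add: diff_divide_distrib[symmetric] abs_divide)

lemma l1_joint_step_eq:
  "l1_joint K (emp_joint xs') (P_MF P (pol t) (emp_joint xs))
   = (\<Sum>k<K. \<Sum>x'\<in>UNIV. \<bar>(\<Sum>a\<in>{a \<in> \<A>. snd a = k}. if xs' a = x' then 1 else 0)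
                            - mf_count t xs {a \<in> \<A>. snd a = k} x'\<bar>) / n_pop"
  unfolding l1_joint_def sum_divide_distrib
  by (intro sum.cong refl) (simp only: pmf_emp_joint pmf_P_MF_emp_joint abs_diff_div_n_pop lessThan_iff)

lemma l1_marg_step_eq:
  "l1_marg K (emp_joint xs') (P_MF P (pol t) (emp_joint xs))
   = (\<Sum>x'\<in>UNIV. \<bar>(\<Sum>a\<in>\<A>. if xs' a = x' then 1 else 0) - mf_count t xs \<A> x'\<bar>) / n_pop"
proof -
  have count: "(\<Sum>k<K. pmf (emp_joint xs') (x',k)) = (\<Sum>a\<in>\<A>. if xs' a = x' then 1 else 0) / n_pop" for x'
    using sum_agents_by_class[where G = "\<lambda>a k. if xs' a = x' then 1 else (0::real)"]
    by (simp add: pmf_emp_joint sum_divide_distrib[symmetric])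
  have mf: "(\<Sum>k<K. pmf (P_MF P (pol t) (emp_joint xs)) (x',k)) = mf_count t xs \<A> x' / n_pop" for x'
    using sum_agents_by_class[where G = "\<lambda>a k. \<Sum>u\<in>UNIV. pmf (act_law t xs a) u * pmf (mf_next_law t xs a u) x'"]
    by (simp add: pmf_P_MF_emp_joint sum_divide_distrib[symmetric] mf_count_def)
  show ?thesis
    unfolding l1_marg_def count mf abs_diff_div_n_pop by (simp add: sum_divide_distrib)
qed

definition err_joint :: real where
  "err_joint = (2 + L_P) * sqrt (real CARD('x) * real CARD('u)) * (\<Sum>k<K. sqrt (real (N k))) / n_pop"

definition err_marg :: real where
  "err_marg = (2 + L_P) * sqrt (real CARD('x) * real CARD('u)) / sqrt n_pop"

lemma expectation_l1_joint_step_le: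
  "measure_pmf.expectation (step t xs) (\<lambda>xs'. l1_joint K (emp_joint xs') (P_MF P (pol t) (emp_joint xs)))
   \<le> err_joint"
proof -
  let ?C = "(2 + L_P) * sqrt (real CARD('x) * real CARD('u))"
  have "measure_pmf.expectation (step t xs) (\<lambda>xs'. l1_joint K (emp_joint xs') (P_MF P (pol t) (emp_joint xs)))
      = (\<Sum>k<K. measure_pmf.expectation (step t xs) (\<lambda>xs'. \<Sum>x'\<in>UNIV.
           \<bar>(\<Sum>a\<in>{a \<in> \<A>. snd a = k}. if xs' a = x' then 1 else 0) - mf_count t xs {a \<in> \<A>. snd a = k} x'\<bar>))
        / n_pop"
    by (simp add: l1_joint_step_eq integrable_measure_pmf_finite finite_set_step)
  also have "\<dots> \<le> (\<Sum>k<K. ?C * sqrt (real (N k))) / n_pop"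
  proof (intro divide_right_mono sum_mono)
    fix k assume "k \<in> {..<K}"
    then show "measure_pmf.expectation (step t xs) (\<lambda>xs'. \<Sum>x'\<in>UNIV.
           \<bar>(\<Sum>a\<in>{a \<in> \<A>. snd a = k}. if xs' a = x' then 1 else 0) - mf_count t xs {a \<in> \<A>. snd a = k} x'\<bar>)
        \<le> ?C * sqrt (real (N k))"
      using expectation_count_deviation_le[of "{a \<in> \<A>. snd a = k}" t xs]
      by (simp add: card_agents_of_class)
  qed (use n_pop_pos in simp)
  also have "\<dots> = err_joint"
    by (simp add: err_joint_def sum_distrib_left)
  finally show ?thesis .
qed

lemma expectation_l1_marg_step_le:
  "measure_pmf.expectation (step t xs) (\<lambda>xs'. l1_marg K (emp_joint xs') (P_MF P (pol t) (emp_joint xs)))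
   \<le> err_marg"
proof -
  have "measure_pmf.expectation (step t xs) (\<lambda>xs'. l1_marg K (emp_joint xs') (P_MF P (pol t) (emp_joint xs)))
      \<le> (2 + L_P) * sqrt (real CARD('x) * real CARD('u)) * sqrt n_pop / n_pop"
    unfolding l1_marg_step_eq using n_pop_pos expectation_count_deviation_le[OF order_refl]
    by (simp add: divide_right_mono card_agents)
  also have "\<dots> = (2 + L_P) * sqrt (real CARD('x) * real CARD('u)) * (sqrt n_pop / n_pop)"
    by simp
  also have "\<dots> = err_marg"
    by (simp only: sqrt_divide_self_eq[OF less_imp_le[OF n_pop_pos]]) (simp add: err_marg_def divide_inverse)
  finally show ?thesis .
qed

section \<open>Propagation of the approximation error\<close>

definition mf_flow :: "(nat \<times> nat \<Rightarrow> 'x) \<Rightarrow> nat \<Rightarrow> ('x \<times> nat) pmf" where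
  "mf_flow x0 t = mf_dist P pol (emp_joint x0) t"

lemma class_supported_mf_flow: "class_supported K (mf_flow x0 t)"
  unfolding mf_flow_def by (intro class_supported_mf_dist class_supported_emp_joint)

lemma mf_flow_Suc: "mf_flow x0 (Suc t) = P_MF P (pol t) (mf_flow x0 t)"
  by (simp add: mf_flow_def)

definition deviation :: "real \<Rightarrow> real \<Rightarrow> (nat \<times> nat \<Rightarrow> 'x) \<Rightarrow> nat \<Rightarrow> real" where
  "deviation \<alpha> \<beta> x0 t = measure_pmf.expectation (state_dist K N P pol x0 t)
     (\<lambda>xs. \<alpha> * l1_joint K (emp_joint xs) (mf_flow x0 t) + \<beta> * l1_marg K (emp_joint xs) (mf_flow x0 t))"

lemma deviation_0: "deviation \<alpha> \<beta> x0 0 = 0"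
  by (simp add: deviation_def mf_flow_def l1_joint_def l1_marg_def)

lemma expectation_step_l1_le:
  fixes xs x0 :: "nat \<times> nat \<Rightarrow> 'x" and t :: nat
  defines "D \<equiv> S_P' * l1_joint K (emp_joint xs) (mf_flow x0 t) + S_P'' * l1_marg K (emp_joint xs) (mf_flow x0 t)"
  shows "measure_pmf.expectation (step t xs) (\<lambda>xs'. l1_joint K (emp_joint xs') (mf_flow x0 (Suc t)))
           \<le> err_joint + D"
    and "measure_pmf.expectation (step t xs) (\<lambda>xs'. l1_marg K (emp_joint xs') (mf_flow x0 (Suc t)))
           \<le> err_marg + D"
proof -
  let ?\<Phi> = "P_MF P (pol t) (emp_joint xs)"
  have lip: "l1_joint K ?\<Phi> (mf_flow x0 (Suc t)) \<le> D"
    unfolding D_def mf_flow_Suc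
    by (intro l1_joint_P_MF_le class_supported_emp_joint class_supported_mf_flow)
  have "measure_pmf.expectation (step t xs) (\<lambda>xs'. l1_joint K (emp_joint xs') (mf_flow x0 (Suc t)))
      \<le> measure_pmf.expectation (step t xs) (\<lambda>xs'. l1_joint K (emp_joint xs') ?\<Phi>)
        + l1_joint K ?\<Phi> (mf_flow x0 (Suc t))"
    by (intro expectation_le_add_const finite_set_step l1_joint_triangle)
  also have "\<dots> \<le> err_joint + D"
    using expectation_l1_joint_step_le lip by (rule add_mono)
  finally show "measure_pmf.expectation (step t xs) (\<lambda>xs'. l1_joint K (emp_joint xs') (mf_flow x0 (Suc t)))
      \<le> err_joint + D" .
  have "measure_pmf.expectation (step t xs) (\<lambda>xs'. l1_marg K (emp_joint xs') (mf_flow x0 (Suc t)))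
      \<le> measure_pmf.expectation (step t xs) (\<lambda>xs'. l1_marg K (emp_joint xs') ?\<Phi>)
        + l1_marg K ?\<Phi> (mf_flow x0 (Suc t))"
    by (intro expectation_le_add_const finite_set_step l1_marg_triangle)
  also have "\<dots> \<le> err_marg + D"
    using expectation_l1_marg_step_le order_trans[OF l1_marg_le_l1_joint lip] by (rule add_mono)
  finally show "measure_pmf.expectation (step t xs) (\<lambda>xs'. l1_marg K (emp_joint xs') (mf_flow x0 (Suc t)))
      \<le> err_marg + D" .
qed

lemma deviation_Suc_le:
  assumes "0 \<le> \<alpha>" "0 \<le> \<beta>"
  shows "deviation \<alpha> \<beta> x0 (Suc t) \<le> \<alpha> * err_joint + \<beta> * err_marg + (\<alpha> + \<beta>) * deviation S_P' S_P'' x0 t"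
proof -
  let ?S = "state_dist K N P pol x0 t"
  let ?D = "\<lambda>xs. S_P' * l1_joint K (emp_joint xs) (mf_flow x0 t) + S_P'' * l1_marg K (emp_joint xs) (mf_flow x0 t)"
  have int: "integrable (measure_pmf ?S) f" "integrable (measure_pmf (step t xs)) g"
    for f g :: "_ \<Rightarrow> real" and xs
    by (simp_all add: integrable_measure_pmf_finite finite_set_state_dist finite_set_step)
  have "deviation \<alpha> \<beta> x0 (Suc t) = measure_pmf.expectation ?S (\<lambda>xs.
          \<alpha> * measure_pmf.expectation (step t xs) (\<lambda>xs'. l1_joint K (emp_joint xs') (mf_flow x0 (Suc t)))
        + \<beta> * measure_pmf.expectation (step t xs) (\<lambda>xs'. l1_marg K (emp_joint xs') (mf_flow x0 (Suc t))))"
    unfolding deviation_def state_dist_Suc_step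
    by (simp add: expectation_bind_pmf_finite[OF finite_set_state_dist finite_set_step] int)
  also have "\<dots> \<le> measure_pmf.expectation ?S (\<lambda>xs. \<alpha> * (err_joint + ?D xs) + \<beta> * (err_marg + ?D xs))"
    using assms expectation_step_l1_le int by (intro integral_mono add_mono mult_left_mono) auto
  also have "\<dots> = \<alpha> * err_joint + \<beta> * err_marg + (\<alpha> + \<beta>) * deviation S_P' S_P'' x0 t"
    by (simp add: deviation_def int algebra_simps)
  finally show ?thesis .
qed

lemma deviation_S_P_le:
  assumes "1 < S_P"
  shows "deviation S_P' S_P'' x0 t \<le> (S_P' * err_joint + S_P'' * err_marg) * (S_P ^ t - 1) / (S_P - 1)"
  unfolding S_P_eq using assms L_P_nonneg L_Q_nonneg
  by (intro linear_recurrence_le deviation_Suc_le) (simp_all add: deviation_0 S_P_eq)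

lemma expected_reward_gap_le:
  "\<bar>measure_pmf.expectation (state_dist K N P pol x0 t) (emp_reward t) - mf_reward t (mf_flow x0 t)\<bar>
   \<le> L_R * (sqrt (real CARD('u)) / sqrt n_pop) + deviation S_R' S_R'' x0 t"
proof -
  let ?S = "state_dist K N P pol x0 t"
  have int: "integrable (measure_pmf ?S) f" for f :: "_ \<Rightarrow> real"
    by (simp add: integrable_measure_pmf_finite finite_set_state_dist)
  have "\<bar>measure_pmf.expectation ?S (emp_reward t) - mf_reward t (mf_flow x0 t)\<bar>
      = \<bar>measure_pmf.expectation ?S (\<lambda>xs. (emp_reward t xs - mf_reward t (emp_joint xs))
                                        + (mf_reward t (emp_joint xs) - mf_reward t (mf_flow x0 t)))\<bar>"
    by (simp add: int)
  also have "\<dots> \<le> measure_pmf.expectation ?S (\<lambda>xs. L_R * (sqrt (real CARD('u)) / sqrt n_pop)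
      + (S_R' * l1_joint K (emp_joint xs) (mf_flow x0 t) + S_R'' * l1_marg K (emp_joint xs) (mf_flow x0 t)))"
    using int emp_reward_diff_le mf_reward_diff_le[OF class_supported_emp_joint class_supported_mf_flow]
    by (intro order_trans[OF integral_abs_bound] integral_mono order_trans[OF abs_triangle_ineq] add_mono)
  also have "\<dots> = L_R * (sqrt (real CARD('u)) / sqrt n_pop) + deviation S_R' S_R'' x0 t"
    by (simp add: deviation_def int)
  finally show ?thesis .
qed

lemma abs_emp_reward_le: "\<bar>emp_reward t xs\<bar> \<le> M_R"
  unfolding emp_reward_def
proof (rule abs_expectation_le[OF finite_set_act_dist])
  fix us
  have "\<bar>\<Sum>a\<in>\<A>. r (snd a) (xs a) (us a) (emp \<A> xs) (emp \<A> us)\<bar> \<le> (\<Sum>a\<in>\<A>. M_R)"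
    using r_bound snd_in_agents by (intro order_trans[OF sum_abs] sum_mono) blast
  then show "\<bar>(\<Sum>a\<in>\<A>. r (snd a) (xs a) (us a) (emp \<A> xs) (emp \<A> us)) / n_pop\<bar> \<le> M_R"
    using n_pop_pos by (simp add: card_agents abs_divide pos_divide_le_eq mult.commute)
qed

lemma sum_expected_agent_rewards:
  "(\<Sum>a\<in>\<A>. measure_pmf.expectation (state_dist K N P pol x0 t) (\<lambda>xs.
       measure_pmf.expectation (act_dist K N pol t xs) (\<lambda>us. r (snd a) (xs a) (us a) (emp \<A> xs) (emp \<A> us))))
   = n_pop * measure_pmf.expectation (state_dist K N P pol x0 t) (emp_reward t)"
proof -
  have inner: "(\<Sum>a\<in>\<A>. measure_pmf.expectation (act_dist K N pol t xs)
          (\<lambda>us. r (snd a) (xs a) (us a) (emp \<A> xs) (emp \<A> us)))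
      = n_pop * emp_reward t xs" for xs
  proof -
    have "(\<Sum>a\<in>\<A>. measure_pmf.expectation (act_dist K N pol t xs)
            (\<lambda>us. r (snd a) (xs a) (us a) (emp \<A> xs) (emp \<A> us)))
        = measure_pmf.expectation (act_dist K N pol t xs)
            (\<lambda>us. \<Sum>a\<in>\<A>. r (snd a) (xs a) (us a) (emp \<A> xs) (emp \<A> us))"
      using finite_set_act_dist
      by (intro Bochner_Integration.integral_sum[symmetric]) (simp add: integrable_measure_pmf_finite)
    then show ?thesis
      using n_pop_pos by (simp add: emp_reward_def)
  qed
  have "(\<Sum>a\<in>\<A>. measure_pmf.expectation (state_dist K N P pol x0 t) (\<lambda>xs.
       measure_pmf.expectation (act_dist K N pol t xs) (\<lambda>us. r (snd a) (xs a) (us a) (emp \<A> xs) (emp \<A> us))))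
      = measure_pmf.expectation (state_dist K N P pol x0 t) (\<lambda>xs. n_pop * emp_reward t xs)"
    unfolding inner[symmetric] using finite_set_state_dist
    by (intro Bochner_Integration.integral_sum[symmetric]) (simp add: integrable_measure_pmf_finite)
  then show ?thesis
    by simp
qed

lemma emp_value_eq:
  assumes "0 \<le> \<gamma>" "\<gamma> < 1"
  shows "emp_value K N r P pol \<gamma> x0
       = (\<Sum>t. \<gamma> ^ t * measure_pmf.expectation (state_dist K N P pol x0 t) (emp_reward t))"
proof -
  define f where "f a t = \<gamma> ^ t * measure_pmf.expectation (state_dist K N P pol x0 t) (\<lambda>xs.
       measure_pmf.expectation (act_dist K N pol t xs) (\<lambda>us. r (snd a) (xs a) (us a) (emp \<A> xs) (emp \<A> us)))"
    for a t
  have summable: "summable (f a)" if "a \<in> \<A>" for a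
    unfolding f_def using assms that r_bound snd_in_agents
    by (intro summable_discounted_bounded abs_expectation_le finite_set_state_dist finite_set_act_dist)
      blast+
  have sum_f: "(\<Sum>a\<in>\<A>. f a t) = n_pop * (\<gamma> ^ t * measure_pmf.expectation (state_dist K N P pol x0 t) (emp_reward t))"
    for t
    unfolding f_def sum_distrib_left[symmetric] sum_expected_agent_rewards by simp
  have "emp_value K N r P pol \<gamma> x0 = (1 / n_pop) * (\<Sum>a\<in>\<A>. suminf (f a))"
    by (simp add: emp_value_def f_def[abs_def])
  also have "\<dots> = (1 / n_pop) * (\<Sum>t. \<Sum>a\<in>\<A>. f a t)"
    using summable by (simp add: suminf_sum)
  also have "\<dots> = (\<Sum>t. (1 / n_pop) * (\<Sum>a\<in>\<A>. f a t))"
    using summable by (intro suminf_mult[symmetric] summable_sum) auto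
  also have "\<dots> = (\<Sum>t. \<gamma> ^ t * measure_pmf.expectation (state_dist K N P pol x0 t) (emp_reward t))"
    using n_pop_pos by (simp add: sum_f)
  finally show ?thesis .
qed

lemma mf_value_emp_joint:
  "mf_value K r P pol \<gamma> (emp_joint x0) = (\<Sum>t. \<gamma> ^ t * mf_reward t (mf_flow x0 t))"
  by (simp add: mf_value_def mf_reward_def mf_flow_def)

lemma expected_reward_gap_le_geometric:
  assumes "1 < S_P"
  shows "\<bar>measure_pmf.expectation (state_dist K N P pol x0 t) (emp_reward t) - mf_reward t (mf_flow x0 t)\<bar>
   \<le> L_R * (sqrt (real CARD('u)) / sqrt n_pop) + (case t of 0 \<Rightarrow> 0 | Suc s \<Rightarrow>
        (S_R' * err_joint + S_R'' * err_marg)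
        + S_R * (S_P' * err_joint + S_P'' * err_marg) / (S_P - 1) * (S_P ^ s - 1))"
proof (cases t)
  case 0
  then show ?thesis
    using expected_reward_gap_le[of x0 t] by (simp add: deviation_0)
next
  case (Suc s)
  have S_R_nonneg: "0 \<le> S_R"
    using M_R_nonneg L_R_nonneg L_Q_nonneg by simp
  have "deviation S_R' S_R'' x0 (Suc s)
      \<le> S_R' * err_joint + S_R'' * err_marg + S_R * deviation S_P' S_P'' x0 s"
    unfolding S_R_eq using M_R_nonneg L_R_nonneg L_Q_nonneg by (intro deviation_Suc_le) simp_all
  also have "\<dots> \<le> S_R' * err_joint + S_R'' * err_marg
      + S_R * ((S_P' * err_joint + S_P'' * err_marg) * (S_P ^ s - 1) / (S_P - 1))"
    using deviation_S_P_le[OF assms] S_R_nonneg by (intro add_left_mono mult_left_mono)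
  finally show ?thesis
    using expected_reward_gap_le[of x0 t] Suc by simp
qed

lemma value_gap_le:
  assumes \<gamma>: "0 \<le> \<gamma>" "\<gamma> < 1" and S_P: "1 < S_P" "\<gamma> * S_P < 1"
  shows "\<bar>emp_value K N r P pol \<gamma> x0 - mf_value K r P pol \<gamma> (emp_joint x0)\<bar>
    \<le> L_R * (sqrt (real CARD('u)) / sqrt n_pop) / (1 - \<gamma>)
      + \<gamma> * (S_R' * err_joint + S_R'' * err_marg) / (1 - \<gamma>)
      + S_R * (S_P' * err_joint + S_P'' * err_marg) / (S_P - 1) * (\<gamma> / (1 - \<gamma> * S_P) - \<gamma> / (1 - \<gamma>))"
    (is "_ \<le> ?V")
proof -
  let ?e = "\<lambda>t. \<gamma> ^ t * measure_pmf.expectation (state_dist K N P pol x0 t) (emp_reward t)"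
  let ?m = "\<lambda>t. \<gamma> ^ t * mf_reward t (mf_flow x0 t)"
  let ?b = "\<lambda>t. \<gamma> ^ t * (L_R * (sqrt (real CARD('u)) / sqrt n_pop) + (case t of 0 \<Rightarrow> 0 | Suc s \<Rightarrow>
        (S_R' * err_joint + S_R'' * err_marg)
        + S_R * (S_P' * err_joint + S_P'' * err_marg) / (S_P - 1) * (S_P ^ s - 1)))"
  have b_sums: "?b sums ?V"
    by (rule discounted_geometric_sums[OF \<gamma> _ S_P(2)]) (use S_P(1) in linarith)
  have "summable ?e"
    by (rule summable_discounted_bounded[OF \<gamma> abs_expectation_le[OF finite_set_state_dist abs_emp_reward_le]])
  moreover have "summable ?m"
    by (rule summable_discounted_bounded[OF \<gamma> abs_mf_reward_le[OF class_supported_mf_flow]])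
  ultimately have diff: "emp_value K N r P pol \<gamma> x0 - mf_value K r P pol \<gamma> (emp_joint x0) = (\<Sum>t. ?e t - ?m t)"
    unfolding emp_value_eq[OF \<gamma>] mf_value_emp_joint by (rule suminf_diff)
  have "\<bar>\<Sum>t. ?e t - ?m t\<bar> \<le> (\<Sum>t. ?b t)"
  proof (rule norm_suminf_le[where 'a = real, unfolded real_norm_def])
    show "summable ?b" using b_sums by (rule sums_summable)
    fix t
    have "\<bar>?e t - ?m t\<bar> = \<gamma> ^ t * \<bar>measure_pmf.expectation (state_dist K N P pol x0 t) (emp_reward t)
                                - mf_reward t (mf_flow x0 t)\<bar>"
      using \<gamma> by (simp add: right_diff_distrib[symmetric] abs_mult)
    also have "\<dots> \<le> ?b t"
      using \<gamma> by (intro mult_left_mono expected_reward_gap_le_geometric S_P(1)) simp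
    finally show "\<bar>?e t - ?m t\<bar> \<le> ?b t" .
  qed
  with diff sums_unique[OF b_sums] show ?thesis
    by simp
qed

lemma value_gap_le_explicit:
  assumes \<gamma>: "0 \<le> \<gamma>" "\<gamma> < 1" and S_P: "1 < S_P" "\<gamma> * S_P < 1"
  shows "\<bar>emp_value K N r P pol \<gamma> x0 - mf_value K r P pol \<gamma> (emp_joint x0)\<bar>
    \<le> (M_R + L_R) / (1 - \<gamma>) * sqrt (real CARD('u)) * (1 / sqrt n_pop)
      + sqrt (real CARD('x) * real CARD('u)) * (\<gamma> * (2 + L_P) / (1 - \<gamma>))
          * (S_R' / n_pop * (\<Sum>k<K. sqrt (real (N k))) + S_R'' / sqrt n_pop)
      + (2 + L_P) * (S_R / (S_P - 1)) * sqrt (real CARD('x) * real CARD('u))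
          * (\<gamma> / (1 - \<gamma> * S_P) - \<gamma> / (1 - \<gamma>))
          * (S_P' / n_pop * (\<Sum>k<K. sqrt (real (N k))) + S_P'' / sqrt n_pop)"
proof -
  have "L_R * (sqrt (real CARD('u)) * inverse (sqrt n_pop) * inverse (1 - \<gamma>))
      \<le> (M_R + L_R) * (sqrt (real CARD('u)) * inverse (sqrt n_pop) * inverse (1 - \<gamma>))"
    using \<gamma> M_R_nonneg by (intro mult_right_mono) auto
  then have sampling: "L_R * (sqrt (real CARD('u)) / sqrt n_pop) / (1 - \<gamma>)
      \<le> (M_R + L_R) / (1 - \<gamma>) * sqrt (real CARD('u)) * (1 / sqrt n_pop)"
    by (simp add: divide_inverse mult_ac)
  have one_step: "\<gamma> * (S_R' * err_joint + S_R'' * err_marg) / (1 - \<gamma>)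
      = sqrt (real CARD('x) * real CARD('u)) * (\<gamma> * (2 + L_P) / (1 - \<gamma>))
          * (S_R' / n_pop * (\<Sum>k<K. sqrt (real (N k))) + S_R'' / sqrt n_pop)"
    unfolding err_joint_def err_marg_def by (simp add: divide_inverse algebra_simps)
  have propagated: "S_R * (S_P' * err_joint + S_P'' * err_marg) / (S_P - 1) * (\<gamma> / (1 - \<gamma> * S_P) - \<gamma> / (1 - \<gamma>))
      = (2 + L_P) * (S_R / (S_P - 1)) * sqrt (real CARD('x) * real CARD('u))
          * (\<gamma> / (1 - \<gamma> * S_P) - \<gamma> / (1 - \<gamma>))
          * (S_P' / n_pop * (\<Sum>k<K. sqrt (real (N k))) + S_P'' / sqrt n_pop)"
    unfolding err_joint_def err_marg_def by (simp add: divide_inverse algebra_simps)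
  note value_gap_le[OF \<gamma> S_P, of x0]
  also note one_step
  also note propagated
  also note sampling
  finally show ?thesis
    by simp
qed

end

theorem theorem3:
  fixes K :: nat and N :: "nat \<Rightarrow> nat"
    and r :: "nat \<Rightarrow> 'x::finite \<Rightarrow> 'u::finite \<Rightarrow> 'x pmf \<Rightarrow> 'u pmf \<Rightarrow> real"
    and P :: "nat \<Rightarrow> 'x \<Rightarrow> 'u \<Rightarrow> 'x pmf \<Rightarrow> 'u pmf \<Rightarrow> 'x pmf"
    and pol :: "nat \<Rightarrow> nat \<Rightarrow> 'x \<Rightarrow> 'x pmf \<Rightarrow> 'u pmf"
    and x0 :: "nat \<times> nat \<Rightarrow> 'x" and mu0 :: "('x \<times> nat) pmf"
    and M_R L_R L_P L_Q \<gamma> :: real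
  assumes K_pos: "K \<ge> 1"
    and N_pos: "\<And>k. k < K \<Longrightarrow> N k \<ge> 1"
    and consts_pos: "M_R > 0" "L_R > 0" "L_P > 0" "L_Q > 0"
    and gamma: "0 \<le> \<gamma>" "\<gamma> < 1"
    and r_bound: "\<And>k x u m n. k < K \<Longrightarrow> \<bar>r k x u m n\<bar> \<le> M_R"
    and r_lip: "\<And>k x u m1 n1 m2 n2. k < K \<Longrightarrow>
        \<bar>r k x u m1 n1 - r k x u m2 n2\<bar> \<le> L_R * (l1 m1 m2 + l1 n1 n2)"
    and P_lip: "\<And>k x u m1 n1 m2 n2. k < K \<Longrightarrow>
        l1 (P k x u m1 n1) (P k x u m2 n2) \<le> L_P * (l1 m1 m2 + l1 n1 n2)"
    and pol_lip: "\<And>t k x m1 m2. k < K \<Longrightarrow>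
        l1 (pol t k x m1) (pol t k x m2) \<le> L_Q * l1 m1 m2"
    and mu0_def: "mu0 = emp (agents K N) (\<lambda>a. (x0 a, snd a))"
    and contr: "\<gamma> * ((1 + L_Q) + L_P * (2 + L_Q)) < 1"
  shows "\<bar>emp_value K N r P pol \<gamma> x0 - mf_value K r P pol \<gamma> mu0\<bar> \<le>
     (let S_R = M_R * (1 + L_Q) + L_R * (2 + L_Q);
          S_P = (1 + L_Q) + L_P * (2 + L_Q);
          C_R = M_R + L_R; C_P = 2 + L_P;
          S_R' = M_R + L_R; S_R'' = M_R * L_Q + L_R * (1 + L_Q);
          S_P' = 1 + L_P; S_P'' = L_Q + L_P * (1 + L_Q);
          Np = real (Npop K N);
          SN = (\<Sum>k<K. sqrt (real (N k)));
          X = real CARD('x); U = real CARD('u)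
      in C_R / (1 - \<gamma>) * sqrt U * (1 / sqrt Np)
         + sqrt (X * U) * (\<gamma> * C_P / (1 - \<gamma>)) * (S_R' / Np * SN + S_R'' / sqrt Np)
         + C_P * (S_R / (S_P - 1)) * sqrt (X * U) * (\<gamma> / (1 - \<gamma> * S_P) - \<gamma> / (1 - \<gamma>))
             * (S_P' / Np * SN + S_P'' / sqrt Np))"
proof -
  interpret mf_population K r P pol M_R L_R L_P L_Q N
    using K_pos N_pos consts_pos r_bound r_lip P_lip pol_lip by unfold_locales auto
  have "mu0 = emp_joint x0"
    by (simp add: mu0_def emp_joint_def)
  moreover have "1 < S_P"
  proof -
    have "0 < L_P * (2 + L_Q)" using consts_pos by simp
    then show ?thesis using consts_pos by linarith
  qed
  ultimately show ?thesis
    unfolding Let_def using value_gap_le_explicit[OF gamma _ contr] by simp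
qed

end
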